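(* The Riemannian manifold $(\mathbb{R}^2,\,e^{\,y-x^2}(dx^2+dy^2))$ admits no non-constant equilibrium function, and hence no equilibrium partition.
   Context: For a metric $h$ on $\mathbb{R}^2$, a real-analytic function $I:\mathbb{R}^2\to\mathbb{R}$ is an equilibrium function of $(\mathbb{R}^2,h)$ if $(\nabla_h I)^2$ and $\Delta_h I$ are constant on each connected component of each level set of $I$. Here $\nabla_h$ is the gradient of $h$ and $\Delta_h$ is the Laplace–Beltrami operator of $h$. *)

theory Defs
  imports "HOL-Analysis.Analysis"
begin

text \<open>Real-analytic functions on the plane: near every point the function is the sum
of an (absolutely, i.e. unconditionally) convergent double power series.\<close>
definition real_analytic2 :: "(real \<times> real \<Rightarrow> real) \<Rightarrow> bool" where
  "real_analytic2 f \<longleftrightarrow>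
     (\<forall>a b. \<exists>r>0. \<exists>c :: nat \<times> nat \<Rightarrow> real.
        \<forall>x y. dist (x, y) (a, b) < r \<longrightarrow>
          ((\<lambda>(m, n). c (m, n) * (x - a) ^ m * (y - b) ^ n) has_sum f (x, y)) UNIV)"

definition pdx :: "(real \<times> real \<Rightarrow> real) \<Rightarrow> real \<times> real \<Rightarrow> real" where
  "pdx f = (\<lambda>(x, y). deriv (\<lambda>t. f (t, y)) x)"

definition pdy :: "(real \<times> real \<Rightarrow> real) \<Rightarrow> real \<times> real \<Rightarrow> real" where
  "pdy f = (\<lambda>(x, y). deriv (\<lambda>t. f (x, t)) y)"

text \<open>A Riemannian metric h = E dx^2 + 2 F dx dy + G dy^2 on the plane, given by its
coefficient functions.  det h = E G - F^2; inverse metric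
(g^11, g^12, g^22) = (G, -F, E) / det h.\<close>

definition metric_det :: "(real \<times> real \<Rightarrow> real) \<Rightarrow> (real \<times> real \<Rightarrow> real) \<Rightarrow> (real \<times> real \<Rightarrow> real)
    \<Rightarrow> real \<times> real \<Rightarrow> real" where
  "metric_det E F G = (\<lambda>p. E p * G p - (F p)\<^sup>2)"

definition grad_sq :: "(real \<times> real \<Rightarrow> real) \<Rightarrow> (real \<times> real \<Rightarrow> real) \<Rightarrow> (real \<times> real \<Rightarrow> real)
    \<Rightarrow> (real \<times> real \<Rightarrow> real) \<Rightarrow> real \<times> real \<Rightarrow> real" where
  "grad_sq E F G I = (\<lambda>p.
     (G p * (pdx I p)\<^sup>2 - 2 * F p * pdx I p * pdy I p + E p * (pdy I p)\<^sup>2)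
       / metric_det E F G p)"

definition laplace_beltrami :: "(real \<times> real \<Rightarrow> real) \<Rightarrow> (real \<times> real \<Rightarrow> real) \<Rightarrow> (real \<times> real \<Rightarrow> real)
    \<Rightarrow> (real \<times> real \<Rightarrow> real) \<Rightarrow> real \<times> real \<Rightarrow> real" where
  "laplace_beltrami E F G I = (\<lambda>p.
     (pdx (\<lambda>q. sqrt (metric_det E F G q) *
              ((G q * pdx I q - F q * pdy I q) / metric_det E F G q)) p
    + pdy (\<lambda>q. sqrt (metric_det E F G q) *
              ((- F q * pdx I q + E q * pdy I q) / metric_det E F G q)) p)
     / sqrt (metric_det E F G p))"

definition equilibrium_function :: "(real \<times> real \<Rightarrow> real) \<Rightarrow> (real \<times> real \<Rightarrow> real)
    \<Rightarrow> (real \<times> real \<Rightarrow> real) \<Rightarrow> (real \<times> real \<Rightarrow> real) \<Rightarrow> bool" where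
  "equilibrium_function E F G I \<longleftrightarrow>
     real_analytic2 I \<and>
     (\<forall>c p q. p \<in> {z. I z = c} \<longrightarrow> q \<in> connected_component_set {z. I z = c} p \<longrightarrow>
        grad_sq E F G I q = grad_sq E F G I p \<and>
        laplace_beltrami E F G I q = laplace_beltrami E F G I p)"

end

theory Submission
  imports Defs
begin

text \<open>For a conformal metric \<open>h = \<mu> (dx\<^sup>2 + dy\<^sup>2)\<close> one has \<open>|\<nabla>\<^sub>h I|\<^sup>2 = |\<nabla>I|\<^sup>2 / \<mu>\<close> and
  \<open>\<Delta>\<^sub>h I = \<Delta>I / \<mu>\<close>; for \<open>\<mu> = e\<^bsup>y - x\<^sup>2\<^esup>\<close> the Gaussian curvature of \<open>h\<close> is
  \<open>\<kappa> = e\<^bsup>x\<^sup>2 - y\<^esup>\<close>.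

  Near a point where \<open>I\<^sub>y > 0\<close> the level sets of \<open>I\<close> are graphs over the \<open>x\<close>-axis, so there
  \<open>|\<nabla>\<^sub>h I|\<^sup>2 = \<phi> \<circ> I\<close> and \<open>\<Delta>\<^sub>h I = \<psi> \<circ> I\<close>. Differentiating these relations twice gives
  \<open>2 \<phi> \<kappa> = (2 \<psi> - \<phi>') (\<phi>' - \<psi>) + \<phi> (\<phi>'' - 2 \<psi>')\<close> along \<open>I\<close>, so \<open>\<kappa>\<close> is a function of
  \<open>I\<close> as well: the level sets are the parabolas \<open>y = x\<^sup>2 + c\<close>, i.e. \<open>I\<^sub>x = -2 x I\<^sub>y\<close>. Along
  such a parabola \<open>|\<nabla>\<^sub>h I|\<^sup>2\<close> is constant only at \<open>x = 0\<close>, which is absurd on an open set.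
  Applying this also to \<open>-I\<close> gives \<open>I\<^sub>y = 0\<close> everywhere; then every vertical line lies in a level
  set, and \<open>|\<nabla>\<^sub>h I|\<^sup>2 = I\<^sub>x\<^sup>2 e\<^bsup>x\<^sup>2 - y\<^esup>\<close> is constant on it only if \<open>I\<^sub>x = 0\<close>.\<close>

subsection \<open>Double power series with Cauchy bounds\<close>

lemma geometric_has_sum:
  fixes z :: real
  assumes "0 \<le> z" "z < 1"
  shows "((\<lambda>n. z ^ n) has_sum (1 / (1 - z))) UNIV"
  by (rule sums_nonneg_imp_has_sum[OF geometric_sums]) (use assms in auto)

lemma geometric_has_sum_prod:
  fixes \<alpha> \<beta> :: real
  assumes "0 \<le> \<alpha>" "\<alpha> < 1" "0 \<le> \<beta>" "\<beta> < 1"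
  shows "((\<lambda>(m, n). \<alpha> ^ m * \<beta> ^ n) has_sum (1 / (1 - \<alpha>) * (1 / (1 - \<beta>)))) UNIV"
proof -
  have rows: "((\<lambda>n. \<alpha> ^ m * \<beta> ^ n) has_sum (\<alpha> ^ m * (1 / (1 - \<beta>)))) UNIV" for m
    by (rule has_sum_cmult_right[OF geometric_has_sum]) (use assms in auto)
  have total: "((\<lambda>m. \<alpha> ^ m * (1 / (1 - \<beta>))) has_sum (1 / (1 - \<alpha>) * (1 / (1 - \<beta>)))) UNIV"
    by (rule has_sum_cmult_left[OF geometric_has_sum]) (use assms in auto)
  have "(\<lambda>(m, n). \<alpha> ^ m * \<beta> ^ n) summable_on Sigma UNIV (\<lambda>_. UNIV)"
    by (rule summable_on_SigmaI[where g = "\<lambda>m. \<alpha> ^ m * (1 / (1 - \<beta>))"])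
       (use rows has_sum_imp_summable[OF total] assms in auto)
  from has_sum_SigmaI[OF _ total this] rows show ?thesis
    by simp
qed

definition coeff_bound :: "(nat \<times> nat \<Rightarrow> real) \<Rightarrow> real \<Rightarrow> real \<Rightarrow> bool" where
  "coeff_bound c r M \<longleftrightarrow> (\<forall>m n. \<bar>c (m, n)\<bar> \<le> M / r ^ (m + n))"

lemma coeff_bound_nonneg:
  assumes "coeff_bound c r M" "0 < r"
  shows "0 \<le> M"
  using assms unfolding coeff_bound_def
  by (metis abs_ge_zero order_trans zero_le_divide_iff zero_less_power not_le)

lemma coeff_bound_abs_summable:
  assumes c: "coeff_bound c r M" and r: "0 < r" and "\<bar>X\<bar> < r" "\<bar>Y\<bar> < r"
  shows "(\<lambda>k. norm ((\<lambda>(m, n). c (m, n) * X ^ m * Y ^ n) k)) summable_on UNIV"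
proof -
  define g where "g = (\<lambda>(m, n). M * ((\<bar>X\<bar> / r) ^ m * (\<bar>Y\<bar> / r) ^ n))"
  have M: "0 \<le> M" using coeff_bound_nonneg[OF c r] .
  have "((\<lambda>k. norm (g k)) has_sum (M * (1 / (1 - \<bar>X\<bar> / r) * (1 / (1 - \<bar>Y\<bar> / r))))) UNIV"
    using has_sum_cmult_right[OF geometric_has_sum_prod[of "\<bar>X\<bar> / r" "\<bar>Y\<bar> / r"], of M] assms M
    by (simp add: g_def case_prod_unfold abs_mult power_abs)
  then have g_summable: "(\<lambda>k. norm (g k)) summable_on UNIV"
    by (rule has_sum_imp_summable)
  show ?thesis
  proof (rule Infinite_Sum.abs_summable_on_comparison_test[OF g_summable])
    fix k :: "nat \<times> nat"
    obtain m n where k: "k = (m, n)" by fastforce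
    have "\<bar>c (m, n)\<bar> * (\<bar>X\<bar> ^ m * \<bar>Y\<bar> ^ n) \<le> (M / r ^ (m + n)) * (\<bar>X\<bar> ^ m * \<bar>Y\<bar> ^ n)"
      using c unfolding coeff_bound_def by (intro mult_right_mono) auto
    also have "\<dots> = M * ((\<bar>X\<bar> / r) ^ m * (\<bar>Y\<bar> / r) ^ n)"
      by (simp add: power_divide power_add)
    finally show "norm ((\<lambda>(m, n). c (m, n) * X ^ m * Y ^ n) k) \<le> norm (g k)"
      using M r by (simp add: k g_def abs_mult power_abs mult.assoc)
  qed
qed

lemma coeff_bound_summable:
  assumes "coeff_bound c r M" "0 < r" "\<bar>X\<bar> < r" "\<bar>Y\<bar> < r"
  shows "(\<lambda>(m, n). c (m, n) * X ^ m * Y ^ n) summable_on UNIV"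
  using abs_summable_summable[OF coeff_bound_abs_summable[OF assms]] .

lemma coeff_bound_summable_row:
  assumes c: "coeff_bound c r M" and r: "0 < r" and Y: "\<bar>Y\<bar> < r"
  shows "(\<lambda>n. c (m, n) * Y ^ n) summable_on UNIV"
proof -
  have "(\<lambda>(m, n). c (m, n) * (r / 2) ^ m * Y ^ n) summable_on Sigma UNIV (\<lambda>_. UNIV)"
    using coeff_bound_summable[OF c r _ Y, of "r / 2"] r by simp
  from summable_on_SigmaD1[where f = "\<lambda>m n. c (m, n) * (r / 2) ^ m * Y ^ n", OF this]
  have "(\<lambda>n. c (m, n) * (r / 2) ^ m * Y ^ n) summable_on UNIV" by simp
  from summable_on_cmult_right[OF this, of "1 / (r / 2) ^ m"] r show ?thesis
    by (simp add: field_simps)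
qed

text \<open>The sup-norm distance is used instead of the Euclidean one of \<^const>\<open>real_analytic2\<close>,
  so that the domain of convergence is a square, which is invariant under swapping the coordinates.\<close>
definition power_series_at ::
    "(real \<times> real \<Rightarrow> real) \<Rightarrow> real \<Rightarrow> real \<Rightarrow> real \<Rightarrow> real \<Rightarrow> (nat \<times> nat \<Rightarrow> real) \<Rightarrow> bool" where
  "power_series_at f a b r M c \<longleftrightarrow> 0 < r \<and> coeff_bound c r M \<and>
     (\<forall>x y. \<bar>x - a\<bar> < r \<longrightarrow> \<bar>y - b\<bar> < r \<longrightarrow>
        ((\<lambda>(m, n). c (m, n) * (x - a) ^ m * (y - b) ^ n) has_sum f (x, y)) UNIV)"

lemma power_series_at_radius_pos: "power_series_at f a b r M c \<Longrightarrow> 0 < r"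
  unfolding power_series_at_def by auto

lemma power_series_at_has_sum:
  "power_series_at f a b r M c \<Longrightarrow> \<bar>x - a\<bar> < r \<Longrightarrow> \<bar>y - b\<bar> < r \<Longrightarrow>
     ((\<lambda>(m, n). c (m, n) * (x - a) ^ m * (y - b) ^ n) has_sum f (x, y)) UNIV"
  unfolding power_series_at_def by auto

text \<open>Summing the rows first turns \<open>t \<mapsto> f (t, y)\<close> into a power series in one variable,
  which is differentiated termwise.\<close>
lemma power_series_at_has_derivative_x:
  assumes f: "power_series_at f a b r M c" and x: "\<bar>x - a\<bar> < r" and y: "\<bar>y - b\<bar> < r"
  shows "((\<lambda>t. f (t, y)) has_real_derivative
           (\<Sum>m. diffs (\<lambda>m. infsum (\<lambda>n. c (m, n) * (y - b) ^ n) UNIV) m * (x - a) ^ m)) (at x)"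
proof -
  define d where "d m = infsum (\<lambda>n. c (m, n) * (y - b) ^ n) UNIV" for m
  have r: "0 < r" and c: "coeff_bound c r M" using f unfolding power_series_at_def by auto
  have rows: "((\<lambda>m. d m * (z - a) ^ m) has_sum f (z, y)) UNIV" if z: "\<bar>z - a\<bar> < r" for z
  proof -
    have row: "((\<lambda>n. c (m, n) * (z - a) ^ m * (y - b) ^ n) has_sum d m * (z - a) ^ m) UNIV" for m
      using has_sum_cmult_left[of "\<lambda>n. c (m, n) * (y - b) ^ n" UNIV "d m" "(z - a) ^ m"]
        coeff_bound_summable_row[OF c r y] by (simp add: d_def ac_simps)
    have "((\<lambda>(m, n). c (m, n) * (z - a) ^ m * (y - b) ^ n) has_sum f (z, y))
        (Sigma UNIV (\<lambda>_. UNIV))"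
      using power_series_at_has_sum[OF f z y] by simp
    then show ?thesis
      by (rule has_sum_SigmaD) (use row in simp)
  qed
  have f_eq: "f (z, y) = (\<Sum>m. d m * (z - a) ^ m)" if "\<bar>z - a\<bar> < r" for z
    using sums_unique[OF has_sum_imp_sums[OF rows[OF that]]] by simp
  define K where "K = (\<bar>x - a\<bar> + r) / 2"
  have K: "\<bar>K\<bar> < r" "\<bar>x - a\<bar> < \<bar>K\<bar>" using x unfolding K_def by auto
  have "summable (\<lambda>m. d m * K ^ m)"
    using sums_summable[OF has_sum_imp_sums[OF rows[of "a + K"]]] K by simp
  then have "DERIV (\<lambda>z. \<Sum>m. d m * z ^ m) (x - a) :> (\<Sum>m. diffs d m * (x - a) ^ m)"
    by (rule termdiffs_strong) (use K in simp)
  moreover have "((\<lambda>t. t - a) has_real_derivative 1) (at x)"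
    by (auto intro!: derivative_eq_intros)
  ultimately have "DERIV (\<lambda>t. \<Sum>m. d m * (t - a) ^ m) x :> (\<Sum>m. diffs d m * (x - a) ^ m)"
    using DERIV_chain2[where f = "\<lambda>z. \<Sum>m. d m * z ^ m" and g = "\<lambda>t. t - a"] by fastforce
  then have "DERIV (\<lambda>t. f (t, y)) x :> (\<Sum>m. diffs d m * (x - a) ^ m)"
    by (rule has_field_derivative_transform_within_open[of _ _ _ "ball a r"])
       (use x f_eq in \<open>auto simp: dist_real_def abs_minus_commute\<close>)
  then show ?thesis unfolding d_def .
qed

lemma power_series_at_has_pdx:
  assumes "power_series_at f a b r M c" "\<bar>x - a\<bar> < r" "\<bar>y - b\<bar> < r"
  shows "((\<lambda>t. f (t, y)) has_real_derivative pdx f (x, y)) (at x)"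
  using power_series_at_has_derivative_x[OF assms]
    DERIV_imp_deriv[OF power_series_at_has_derivative_x[OF assms]]
  by (simp add: pdx_def)

lemma Suc_le_two_power_add: "real (Suc m) \<le> 2 ^ (m + n)"
proof -
  have "Suc m \<le> (2::nat) ^ m" using less_exp[of m] by (simp add: Suc_le_eq)
  also have "(2::nat) ^ m \<le> 2 ^ (m + n)" by (rule power_increasing) auto
  finally show ?thesis by (metis of_nat_le_iff of_nat_numeral of_nat_power)
qed

lemma coeff_bound_pdx:
  assumes c: "coeff_bound c r M" and r: "0 < r"
  shows "coeff_bound (\<lambda>(m, n). real (Suc m) * c (Suc m, n)) (r / 2) (M / r)"
  unfolding coeff_bound_def
proof (intro allI)
  fix m n
  have M: "0 \<le> M" using coeff_bound_nonneg[OF c r] .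
  have "\<bar>c (Suc m, n)\<bar> \<le> M / r ^ (Suc m + n)"
    using c unfolding coeff_bound_def by blast
  then have "real (Suc m) * \<bar>c (Suc m, n)\<bar> \<le> real (Suc m) * (M / r ^ (Suc m + n))"
    by (intro mult_left_mono) auto
  then have "\<bar>real (Suc m) * c (Suc m, n)\<bar> \<le> real (Suc m) * (M / r ^ (Suc m + n))"
    by (simp add: abs_mult)
  also have "\<dots> \<le> 2 ^ (m + n) * (M / r ^ (Suc m + n))"
    using Suc_le_two_power_add[of m n] M r by (intro mult_right_mono) auto
  also have "\<dots> = (M / r) / (r / 2) ^ (m + n)"
    using r by (simp add: power_divide field_simps)
  finally show "\<bar>(\<lambda>(m, n). real (Suc m) * c (Suc m, n)) (m, n)\<bar> \<le> (M / r) / (r / 2) ^ (m + n)"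
    by simp
qed

lemma power_series_at_pdx:
  assumes f: "power_series_at f a b r M c"
  shows "power_series_at (pdx f) a b (r / 2) (M / r) (\<lambda>(m, n). real (Suc m) * c (Suc m, n))"
proof -
  have r: "0 < r" and c: "coeff_bound c r M" using f unfolding power_series_at_def by auto
  note c' = coeff_bound_pdx[OF c r]
  have "((\<lambda>(m, n). real (Suc m) * c (Suc m, n) * (x - a) ^ m * (y - b) ^ n) has_sum pdx f (x, y)) UNIV"
    if x: "\<bar>x - a\<bar> < r / 2" and y: "\<bar>y - b\<bar> < r / 2" for x y
  proof -
    define d where "d m = infsum (\<lambda>n. c (m, n) * (y - b) ^ n) UNIV" for m
    have x': "\<bar>x - a\<bar> < r" and y': "\<bar>y - b\<bar> < r" using x y by linarith+
    have pdx_eq: "pdx f (x, y) = (\<Sum>m. diffs d m * (x - a) ^ m)"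
      using DERIV_imp_deriv[OF power_series_at_has_derivative_x[OF f x' y']]
      unfolding d_def pdx_def by simp
    obtain S where S: "((\<lambda>(m, n). real (Suc m) * c (Suc m, n) * (x - a) ^ m * (y - b) ^ n)
        has_sum S) (Sigma UNIV (\<lambda>_. UNIV))"
      using coeff_bound_summable[OF c' _ x y] r unfolding summable_on_def by auto
    have row: "((\<lambda>n. real (Suc m) * c (Suc m, n) * (x - a) ^ m * (y - b) ^ n) has_sum
        (diffs d m * (x - a) ^ m)) UNIV" for m
    proof -
      have "((\<lambda>n. c (Suc m, n) * (y - b) ^ n) has_sum d (Suc m)) UNIV"
        using coeff_bound_summable_row[OF c r y'] by (simp add: d_def)
      from has_sum_cmult_right[OF this, of "real (Suc m) * (x - a) ^ m"] show ?thesis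
        by (simp add: diffs_def ac_simps)
    qed
    have "((\<lambda>m. diffs d m * (x - a) ^ m) has_sum S) UNIV"
      by (rule has_sum_SigmaD[OF S]) (use row in simp)
    then have "S = pdx f (x, y)"
      using sums_unique[OF has_sum_imp_sums] pdx_eq by metis
    with S show ?thesis by simp
  qed
  with r c' show ?thesis unfolding power_series_at_def by auto
qed

definition swap_args :: "(real \<times> real \<Rightarrow> real) \<Rightarrow> real \<times> real \<Rightarrow> real" where
  "swap_args f = (\<lambda>(x, y). f (y, x))"

lemma pdy_eq_swap_pdx: "pdy f = swap_args (pdx (swap_args f))"
  by (auto simp: swap_args_def pdx_def pdy_def fun_eq_iff)

lemma power_series_at_swap:
  assumes f: "power_series_at f a b r M c"
  shows "power_series_at (swap_args f) b a r M (\<lambda>(m, n). c (n, m))"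
proof -
  have r: "0 < r" and c: "coeff_bound c r M" using f unfolding power_series_at_def by auto
  have "coeff_bound (\<lambda>(m, n). c (n, m)) r M"
    unfolding coeff_bound_def
  proof (intro allI)
    fix m n
    have "\<bar>c (n, m)\<bar> \<le> M / r ^ (n + m)" using c unfolding coeff_bound_def by blast
    then show "\<bar>(\<lambda>(m, n). c (n, m)) (m, n)\<bar> \<le> M / r ^ (m + n)"
      by (simp add: add.commute)
  qed
  moreover have "((\<lambda>(m, n). c (n, m) * (x - b) ^ m * (y - a) ^ n) has_sum swap_args f (x, y)) UNIV"
    if "\<bar>x - b\<bar> < r" "\<bar>y - a\<bar> < r" for x y
  proof -
    have "((\<lambda>(m, n). c (m, n) * (y - a) ^ m * (x - b) ^ n) has_sum f (y, x)) (UNIV \<times> UNIV)"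
      using power_series_at_has_sum[OF f] that by simp
    from has_sum_swap[THEN iffD1, OF this] show ?thesis
      by (simp add: swap_args_def case_prod_unfold ac_simps)
  qed
  ultimately show ?thesis using r unfolding power_series_at_def by auto
qed

lemma power_series_at_pdy:
  assumes "power_series_at f a b r M c"
  shows "power_series_at (pdy f) a b (r / 2) (M / r) (\<lambda>(m, n). real (Suc n) * c (m, Suc n))"
  using power_series_at_swap[OF power_series_at_pdx[OF power_series_at_swap[OF assms]]]
  by (simp add: pdy_eq_swap_pdx)

lemma power_series_at_has_pdy:
  assumes "power_series_at f a b r M c" "\<bar>x - a\<bar> < r" "\<bar>y - b\<bar> < r"
  shows "((\<lambda>t. f (x, t)) has_real_derivative pdy f (x, y)) (at y)"
  using power_series_at_has_pdx[OF power_series_at_swap[OF assms(1)] assms(3,2)]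
  by (simp add: pdy_eq_swap_pdx swap_args_def)

lemma has_sum_single_support:
  fixes g :: "nat \<times> nat \<Rightarrow> real"
  assumes "\<And>k. k \<noteq> (0, 0) \<Longrightarrow> g k = 0"
  shows "(g has_sum g (0, 0)) UNIV"
proof -
  have "(g has_sum g (0, 0)) {(0, 0)}"
    using has_sum_finite[of "{(0, 0)}" g] by simp
  then show ?thesis
    by (rule has_sum_cong_neutral[THEN iffD1, rotated -1]) (use assms in auto)
qed

lemma power_series_at_center:
  assumes f: "power_series_at f a b r M c"
  shows "f (a, b) = c (0, 0)"
proof -
  have "((\<lambda>(m, n). c (m, n) * (a - a) ^ m * (b - b) ^ n) has_sum f (a, b)) UNIV"
    using power_series_at_has_sum[OF f, of a b] power_series_at_radius_pos[OF f] by simp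
  moreover have "((\<lambda>(m, n). c (m, n) * (a - a) ^ m * (b - b) ^ n) has_sum c (0, 0)) UNIV"
  proof -
    have "(\<lambda>(m, n). c (m, n) * (a - a) ^ m * (b - b) ^ n) k = 0" if "k \<noteq> (0, 0)" for k
      using that by (auto simp: zero_power split: prod.splits)
    from has_sum_single_support[of "\<lambda>(m, n). c (m, n) * (a - a) ^ m * (b - b) ^ n", OF this]
    show ?thesis by simp
  qed
  ultimately show ?thesis using has_sum_unique by blast
qed

lemma coeff_bound_term_le:
  assumes c: "coeff_bound c r M" and r: "0 < r" and d: "2 * d \<le> r"
    and X: "\<bar>X\<bar> \<le> d" and Y: "\<bar>Y\<bar> \<le> d" and mn: "1 \<le> m + n"
  shows "\<bar>c (m, n) * X ^ m * Y ^ n\<bar> \<le> M * (2 * d / r) * ((1 / 2) ^ m * (1 / 2) ^ n)"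
proof -
  define t where "t = 2 * d / r"
  have t: "0 \<le> t" "t \<le> 1" using d r X unfolding t_def by (auto simp: field_simps)
  have M: "0 \<le> M" using coeff_bound_nonneg[OF c r] .
  have "\<bar>c (m, n) * X ^ m * Y ^ n\<bar> = \<bar>c (m, n)\<bar> * (\<bar>X\<bar> ^ m * \<bar>Y\<bar> ^ n)"
    by (simp add: abs_mult power_abs)
  also have "\<dots> \<le> (M / r ^ (m + n)) * (d ^ m * d ^ n)"
    using c X Y unfolding coeff_bound_def
    by (intro mult_mono mult_mono' power_mono) (auto intro: mult_nonneg_nonneg)
  also have "\<dots> = M * (t / 2) ^ (m + n)"
    unfolding t_def using r by (simp add: power_add power_divide field_simps)
  also have "\<dots> = M * (t ^ (m + n) * (1 / 2) ^ (m + n))"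
    by (simp add: power_mult_distrib power_divide)
  also have "\<dots> \<le> M * (t * (1 / 2) ^ (m + n))"
  proof -
    have "t ^ (m + n) \<le> t ^ 1" by (rule power_decreasing) (use t mn in auto)
    then show ?thesis using M by (intro mult_left_mono) auto
  qed
  finally show ?thesis unfolding t_def by (simp add: power_add ac_simps)
qed

lemma power_series_at_dist_center:
  assumes f: "power_series_at f a b r M c" and d: "0 < d" "d \<le> r / 2"
    and x: "\<bar>x - a\<bar> \<le> d" and y: "\<bar>y - b\<bar> \<le> d"
  shows "\<bar>f (x, y) - f (a, b)\<bar> \<le> 8 * M * d / r"
proof -
  have r: "0 < r" and c: "coeff_bound c r M" using f unfolding power_series_at_def by auto
  have M: "0 \<le> M" using coeff_bound_nonneg[OF c r] .
  define \<delta> where "\<delta> = (\<lambda>k::nat \<times> nat. if k = (0, 0) then c (0, 0) else 0)"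
  have "\<bar>x - a\<bar> < r" "\<bar>y - b\<bar> < r" using x y d by linarith+
  then have series: "((\<lambda>(m, n). c (m, n) * (x - a) ^ m * (y - b) ^ n) has_sum f (x, y)) UNIV"
    by (rule power_series_at_has_sum[OF f])
  have "(\<delta> has_sum \<delta> (0, 0)) UNIV"
    by (rule has_sum_single_support) (simp add: \<delta>_def)
  moreover have "\<delta> (0, 0) = c (0, 0)" by (simp add: \<delta>_def)
  ultimately have "(\<delta> has_sum c (0, 0)) UNIV" by simp
  from has_sum_add[OF series has_sum_uminusI[OF this]]
  have tail: "((\<lambda>k. (\<lambda>(m, n). c (m, n) * (x - a) ^ m * (y - b) ^ n) k + - \<delta> k)
      has_sum (f (x, y) + - c (0, 0))) UNIV" .
  have majorant: "((\<lambda>(m, n). M * (2 * d / r) * ((1 / 2) ^ m * (1 / 2) ^ n)) has_sum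
      (M * (2 * d / r) * 4)) UNIV"
    using has_sum_cmult_right[OF geometric_has_sum_prod[of "1 / 2" "1 / 2"], of "M * (2 * d / r)"]
    by (simp add: case_prod_unfold)
  have "norm ((\<lambda>(m, n). c (m, n) * (x - a) ^ m * (y - b) ^ n) k + - \<delta> k)
      \<le> (\<lambda>(m, n). M * (2 * d / r) * ((1 / 2) ^ m * (1 / 2) ^ n)) k" for k
  proof -
    obtain m n where k: "k = (m, n)" by fastforce
    show ?thesis
    proof (cases "k = (0, 0)")
      case True then show ?thesis using M d r by (simp add: k \<delta>_def)
    next
      case False
      then have "1 \<le> m + n" and "\<delta> k = 0" using k by (auto simp: \<delta>_def)
      with coeff_bound_term_le[OF c r _ x y] d show ?thesis
        by (simp add: k)
    qed
  qed
  from norm_infsum_le[OF tail majorant this]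
  have "\<bar>f (x, y) - c (0, 0)\<bar> \<le> M * (2 * d / r) * 4" by simp
  then show ?thesis using power_series_at_center[OF f] by simp
qed

lemma power_series_at_isCont:
  assumes f: "power_series_at f a b r M c"
  shows "isCont f (a, b)"
  unfolding continuous_at_eps_delta
proof (intro allI impI)
  fix e :: real assume e: "0 < e"
  have r: "0 < r" and c: "coeff_bound c r M" using f unfolding power_series_at_def by auto
  have M: "0 \<le> M" using coeff_bound_nonneg[OF c r] .
  define d where "d = min (r / 2) (e * r / (16 * (M + 1)))"
  have "0 < d" using e r M unfolding d_def by simp
  moreover have "d \<le> r / 2" "d \<le> e * r / (16 * (M + 1))"
    unfolding d_def by (rule min.cobounded1, rule min.cobounded2)
  ultimately have d: "0 < d" "d \<le> r / 2" "d \<le> e * r / (16 * (M + 1))" by blast+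
  have "8 * M * d \<le> 8 * (M + 1) * d" using d(1) by simp
  also have "\<dots> \<le> e * r / 2" using d(3) M by (simp add: field_simps)
  also have "\<dots> < e * r" using mult_pos_pos[OF e r] by simp
  finally have small: "8 * M * d / r < e" using r by (simp add: divide_less_eq)
  show "\<exists>d>0. \<forall>z. dist z (a, b) < d \<longrightarrow> dist (f z) (f (a, b)) < e"
  proof (intro exI[of _ d] conjI allI impI)
    fix z assume z: "dist z (a, b) < d"
    obtain x y where z_eq: "z = (x, y)" by fastforce
    have "\<bar>x - a\<bar> \<le> d" "\<bar>y - b\<bar> \<le> d"
      using dist_fst_le[of z "(a, b)"] dist_snd_le[of z "(a, b)"] z z_eq
      by (auto simp: dist_real_def)
    from power_series_at_dist_center[OF f d(1,2) this] small
    show "dist (f z) (f (a, b)) < e" by (simp add: z_eq dist_real_def)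
  qed (fact d)
qed

lemma power_series_at_uminus:
  assumes "power_series_at f a b r M c"
  shows "power_series_at (\<lambda>z. - f z) a b r M (\<lambda>k. - c k)"
proof -
  have "((\<lambda>(m, n). - c (m, n) * (x - a) ^ m * (y - b) ^ n) has_sum - f (x, y)) UNIV"
    if "\<bar>x - a\<bar> < r" "\<bar>y - b\<bar> < r" for x y
    using has_sum_uminusI[OF power_series_at_has_sum[OF assms that]] by (simp add: case_prod_unfold)
  with assms show ?thesis unfolding power_series_at_def coeff_bound_def by auto
qed

subsection \<open>Functions with Cauchy-bounded local power series\<close>

definition cauchy_analytic :: "(real \<times> real \<Rightarrow> real) \<Rightarrow> bool" where
  "cauchy_analytic f \<longleftrightarrow> (\<forall>a b. \<exists>r M c. power_series_at f a b r M c)"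

lemma cauchy_analytic_pdx: "cauchy_analytic f \<Longrightarrow> cauchy_analytic (pdx f)"
  unfolding cauchy_analytic_def by (meson power_series_at_pdx)

lemma cauchy_analytic_pdy: "cauchy_analytic f \<Longrightarrow> cauchy_analytic (pdy f)"
  unfolding cauchy_analytic_def by (meson power_series_at_pdy)

lemma cauchy_analytic_uminus:
  assumes "cauchy_analytic f"
  shows "cauchy_analytic (\<lambda>z. - f z)"
  unfolding cauchy_analytic_def
proof (intro allI)
  fix a b
  obtain r M c where "power_series_at f a b r M c"
    using assms unfolding cauchy_analytic_def by blast
  then show "\<exists>r M c. power_series_at (\<lambda>z. - f z) a b r M c"
    by (intro exI) (rule power_series_at_uminus)
qed

lemma cauchy_analytic_has_pdx:
  assumes "cauchy_analytic f"
  shows "((\<lambda>t. f (t, y)) has_real_derivative pdx f (x, y)) (at x within A)"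
proof -
  obtain r M c where f: "power_series_at f x y r M c"
    using assms unfolding cauchy_analytic_def by blast
  have "((\<lambda>t. f (t, y)) has_real_derivative pdx f (x, y)) (at x)"
    using power_series_at_has_pdx[OF f] power_series_at_radius_pos[OF f] by simp
  then show ?thesis by (rule has_field_derivative_at_within)
qed

lemma cauchy_analytic_has_pdy:
  assumes "cauchy_analytic f"
  shows "((\<lambda>t. f (x, t)) has_real_derivative pdy f (x, y)) (at y within A)"
proof -
  obtain r M c where f: "power_series_at f x y r M c"
    using assms unfolding cauchy_analytic_def by blast
  have "((\<lambda>t. f (x, t)) has_real_derivative pdy f (x, y)) (at y)"
    using power_series_at_has_pdy[OF f] power_series_at_radius_pos[OF f] by simp
  then show ?thesis by (rule has_field_derivative_at_within)
qed

lemma cauchy_analytic_isCont: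
  assumes "cauchy_analytic f"
  shows "isCont f z"
proof -
  obtain a b where z: "z = (a, b)" by fastforce
  obtain r M c where "power_series_at f a b r M c"
    using assms unfolding cauchy_analytic_def by blast
  then show ?thesis unfolding z by (rule power_series_at_isCont)
qed

lemma cauchy_analytic_continuous_on: "cauchy_analytic f \<Longrightarrow> continuous_on A f"
  by (simp add: cauchy_analytic_isCont continuous_at_imp_continuous_on)

text \<open>Both mixed partials at \<open>(a, b)\<close> equal the coefficient \<open>c (1, 1)\<close>.\<close>
lemma cauchy_analytic_pdx_pdy_commute:
  assumes "cauchy_analytic f"
  shows "pdy (pdx f) = pdx (pdy f)"
proof
  fix z :: "real \<times> real"
  obtain a b where z: "z = (a, b)" by fastforce
  obtain r M c where "power_series_at f a b r M c"
    using assms unfolding cauchy_analytic_def by blast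
  then show "pdy (pdx f) z = pdx (pdy f) z"
    using power_series_at_center[OF power_series_at_pdy[OF power_series_at_pdx]]
      power_series_at_center[OF power_series_at_pdx[OF power_series_at_pdy]] z by simp
qed

lemma pdx_uminus:
  assumes "cauchy_analytic f"
  shows "pdx (\<lambda>z. - f z) = (\<lambda>z. - pdx f z)"
proof
  fix z :: "real \<times> real"
  obtain x y where z: "z = (x, y)" by fastforce
  have "((\<lambda>t. - f (t, y)) has_real_derivative - pdx f (x, y)) (at x)"
    using cauchy_analytic_has_pdx[OF assms] by (rule DERIV_minus)
  then show "pdx (\<lambda>z. - f z) z = - pdx f z"
    unfolding z pdx_def using DERIV_imp_deriv by fastforce
qed

lemma pdy_uminus:
  assumes "cauchy_analytic f"
  shows "pdy (\<lambda>z. - f z) = (\<lambda>z. - pdy f z)"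
proof
  fix z :: "real \<times> real"
  obtain x y where z: "z = (x, y)" by fastforce
  have "((\<lambda>t. - f (x, t)) has_real_derivative - pdy f (x, y)) (at y)"
    using cauchy_analytic_has_pdy[OF assms] by (rule DERIV_minus)
  then show "pdy (\<lambda>z. - f z) z = - pdy f z"
    unfolding z pdy_def using DERIV_imp_deriv by fastforce
qed

lemma dist_Pair_less_if_half:
  fixes x y a b r :: real
  assumes r: "0 < r" and "\<bar>x - a\<bar> \<le> r / 2" "\<bar>y - b\<bar> \<le> r / 2"
  shows "dist (x, y) (a, b) < r"
proof -
  have "(x - a)\<^sup>2 \<le> (r / 2)\<^sup>2" "(y - b)\<^sup>2 \<le> (r / 2)\<^sup>2"
    using power_mono[OF assms(2), of 2] power_mono[OF assms(3), of 2] by auto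
  then have "(x - a)\<^sup>2 + (y - b)\<^sup>2 \<le> r\<^sup>2 / 2"
    by (simp add: power_divide)
  moreover have "0 < r\<^sup>2" using r by simp
  ultimately have "(x - a)\<^sup>2 + (y - b)\<^sup>2 < r\<^sup>2" by linarith
  then have "sqrt ((x - a)\<^sup>2 + (y - b)\<^sup>2) < sqrt (r\<^sup>2)" by (rule real_sqrt_less_mono)
  then show ?thesis using r by (simp add: dist_Pair_Pair dist_real_def)
qed

text \<open>Absolute convergence at the corner \<open>(a + \<rho>, b + \<rho>)\<close> of a square inside the disc of
  convergence bounds every term by the sum of absolute values.\<close>
lemma real_analytic2_imp_cauchy_analytic:
  assumes "real_analytic2 f"
  shows "cauchy_analytic f"
  unfolding cauchy_analytic_def
proof (intro allI)
  fix a b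
  obtain r c where r: "0 < r" and conv: "\<And>x y. dist (x, y) (a, b) < r \<Longrightarrow>
      ((\<lambda>(m, n). c (m, n) * (x - a) ^ m * (y - b) ^ n) has_sum f (x, y)) UNIV"
    using assms unfolding real_analytic2_def by blast
  define \<rho> where "\<rho> = r / 2"
  have \<rho>: "0 < \<rho>" using r unfolding \<rho>_def by auto
  have in_disc: "dist (x, y) (a, b) < r" if "\<bar>x - a\<bar> \<le> \<rho>" "\<bar>y - b\<bar> \<le> \<rho>" for x y
    using dist_Pair_less_if_half[OF r] that unfolding \<rho>_def .
  define g where "g = (\<lambda>(m, n). c (m, n) * \<rho> ^ m * \<rho> ^ n)"
  have "g summable_on UNIV"
    using has_sum_imp_summable[OF conv[OF in_disc, of "a + \<rho>" "b + \<rho>"]] \<rho> by (simp add: g_def)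
  then have abs_g: "(\<lambda>k. norm (g k)) summable_on UNIV"
    using summable_on_iff_abs_summable_on_real by blast
  define M where "M = infsum (\<lambda>k. norm (g k)) UNIV"
  have "coeff_bound c \<rho> M" unfolding coeff_bound_def
  proof (intro allI)
    fix m n
    have "((\<lambda>k. norm (g k)) has_sum norm (g (m, n))) {(m, n)}"
      using has_sum_finite[of "{(m, n)}" "\<lambda>k. norm (g k)"] by simp
    then have "norm (g (m, n)) \<le> M" unfolding M_def
      by (rule has_sum_mono_neutral[OF _ has_sum_infsum[OF abs_g]]) auto
    then have "\<bar>c (m, n)\<bar> * \<rho> ^ (m + n) \<le> M" using \<rho> by (simp add: g_def abs_mult power_add)
    then show "\<bar>c (m, n)\<bar> \<le> M / \<rho> ^ (m + n)" using \<rho> by (simp add: field_simps)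
  qed
  then have "power_series_at f a b \<rho> M c"
    unfolding power_series_at_def using \<rho> conv in_disc by auto
  then show "\<exists>r M c. power_series_at f a b r M c" by blast
qed

subsection \<open>Level sets near a point where \<open>u\<^sub>y > 0\<close>\<close>

lemma cauchy_analytic_strict_mono_vertical:
  assumes "cauchy_analytic u" "y\<^sub>1 < y\<^sub>2" "\<And>y. y\<^sub>1 \<le> y \<Longrightarrow> y \<le> y\<^sub>2 \<Longrightarrow> pdy u (x, y) > 0"
  shows "u (x, y\<^sub>1) < u (x, y\<^sub>2)"
proof -
  have "(\<lambda>y. u (x, y)) y\<^sub>1 < (\<lambda>y. u (x, y)) y\<^sub>2"
  proof (rule DERIV_pos_imp_increasing[OF assms(2)])
    fix y assume "y\<^sub>1 \<le> y" "y \<le> y\<^sub>2"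
    then show "\<exists>D. DERIV (\<lambda>y. u (x, y)) y :> D \<and> D > 0"
      using cauchy_analytic_has_pdy[OF assms(1)] assms(3) by blast
  qed
  then show ?thesis by simp
qed

text \<open>On the vertical segments of the box \<open>u\<close> increases from below \<open>u (x\<^sub>0, y\<^sub>0) - \<eta>\<close> to
  above \<open>u (x\<^sub>0, y\<^sub>0) + \<eta>\<close>, so inside \<open>S\<close> each level set of \<open>u\<close> is a graph over the
  \<open>x\<close>-interval, and a function that is constant on level components is a function of \<open>u\<close>.\<close>
locale regular_box =
  fixes u :: "real \<times> real \<Rightarrow> real" and x\<^sub>0 y\<^sub>0 \<delta> \<epsilon> \<eta> :: real
  assumes analytic: "cauchy_analytic u"
    and \<delta>_pos: "0 < \<delta>" and \<epsilon>_pos: "0 < \<epsilon>" and \<eta>_pos: "0 < \<eta>"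
    and pdy_pos: "\<And>x y. \<bar>x - x\<^sub>0\<bar> \<le> \<delta> \<Longrightarrow> \<bar>y - y\<^sub>0\<bar> \<le> \<epsilon> \<Longrightarrow> pdy u (x, y) > 0"
    and below_bottom: "\<And>x. \<bar>x - x\<^sub>0\<bar> \<le> \<delta> \<Longrightarrow> u (x, y\<^sub>0 - \<epsilon>) < u (x\<^sub>0, y\<^sub>0) - \<eta>"
    and above_top: "\<And>x. \<bar>x - x\<^sub>0\<bar> \<le> \<delta> \<Longrightarrow> u (x, y\<^sub>0 + \<epsilon>) > u (x\<^sub>0, y\<^sub>0) + \<eta>"
begin

definition S :: "(real \<times> real) set" where
  "S = {z. \<bar>fst z - x\<^sub>0\<bar> < \<delta> \<and> \<bar>snd z - y\<^sub>0\<bar> < \<epsilon> \<and> \<bar>u z - u (x\<^sub>0, y\<^sub>0)\<bar> < \<eta>}"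

lemma open_S: "open S"
  unfolding S_def
  by (intro open_Collect_conj open_Collect_less continuous_intros
      cauchy_analytic_continuous_on[OF analytic])

lemma center_in_S: "(x\<^sub>0, y\<^sub>0) \<in> S"
  using \<delta>_pos \<epsilon>_pos \<eta>_pos by (simp add: S_def)

lemma S_bounds: "z \<in> S \<Longrightarrow> \<bar>fst z - x\<^sub>0\<bar> < \<delta> \<and> \<bar>snd z - y\<^sub>0\<bar> < \<epsilon> \<and> \<bar>u z - u (x\<^sub>0, y\<^sub>0)\<bar> < \<eta>"
  by (simp add: S_def)

lemma pdy_nonzero: "z \<in> S \<Longrightarrow> pdy u z \<noteq> 0"
  using S_bounds[of z] pdy_pos[of "fst z" "snd z"] by fastforce

lemma strict_mono_vertical:
  assumes "\<bar>x - x\<^sub>0\<bar> \<le> \<delta>" "y\<^sub>0 - \<epsilon> \<le> y\<^sub>1" "y\<^sub>1 < y\<^sub>2" "y\<^sub>2 \<le> y\<^sub>0 + \<epsilon>"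
  shows "u (x, y\<^sub>1) < u (x, y\<^sub>2)"
  using cauchy_analytic_strict_mono_vertical[OF analytic assms(3)] pdy_pos assms by auto

lemma inj_vertical:
  assumes "\<bar>x - x\<^sub>0\<bar> \<le> \<delta>" "y\<^sub>0 - \<epsilon> \<le> y\<^sub>1" "y\<^sub>1 \<le> y\<^sub>0 + \<epsilon>" "y\<^sub>0 - \<epsilon> \<le> y\<^sub>2" "y\<^sub>2 \<le> y\<^sub>0 + \<epsilon>"
    and "u (x, y\<^sub>1) = u (x, y\<^sub>2)"
  shows "y\<^sub>1 = y\<^sub>2"
  using strict_mono_vertical[of x y\<^sub>1 y\<^sub>2] strict_mono_vertical[of x y\<^sub>2 y\<^sub>1] assms
  by (cases y\<^sub>1 y\<^sub>2 rule: linorder_cases) auto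

lemma level_meets_vertical:
  assumes x: "\<bar>x - x\<^sub>0\<bar> \<le> \<delta>" and s: "\<bar>s - u (x\<^sub>0, y\<^sub>0)\<bar> < \<eta>"
  obtains y where "y\<^sub>0 - \<epsilon> < y" "y < y\<^sub>0 + \<epsilon>" "u (x, y) = s"
proof -
  have "continuous_on {y\<^sub>0 - \<epsilon>..y\<^sub>0 + \<epsilon>} (\<lambda>y. u (x, y))"
    using cauchy_analytic_has_pdy[OF analytic] DERIV_isCont
    by (blast intro: continuous_at_imp_continuous_on)
  moreover have "u (x, y\<^sub>0 - \<epsilon>) \<le> s" "s \<le> u (x, y\<^sub>0 + \<epsilon>)" "y\<^sub>0 - \<epsilon> \<le> y\<^sub>0 + \<epsilon>"
    using below_bottom[OF x] above_top[OF x] s \<epsilon>_pos by (auto simp: abs_less_iff)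
  ultimately obtain y where y: "y\<^sub>0 - \<epsilon> \<le> y" "y \<le> y\<^sub>0 + \<epsilon>" "u (x, y) = s"
    using IVT'[of "\<lambda>y. u (x, y)" "y\<^sub>0 - \<epsilon>" s "y\<^sub>0 + \<epsilon>"] by auto
  moreover have "y \<noteq> y\<^sub>0 - \<epsilon>" "y \<noteq> y\<^sub>0 + \<epsilon>"
    using y below_bottom[OF x] above_top[OF x] s by auto
  ultimately have "y\<^sub>0 - \<epsilon> < y" "y < y\<^sub>0 + \<epsilon>" by auto
  then show ?thesis using y(3) that by blast
qed

definition closed_box :: "(real \<times> real) set" where
  "closed_box = {x\<^sub>0 - \<delta>..x\<^sub>0 + \<delta>} \<times> {y\<^sub>0 - \<epsilon>..y\<^sub>0 + \<epsilon>}"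

lemma S_subset_closed_box: "S \<subseteq> closed_box"
  by (auto simp: S_def closed_box_def mem_Times_iff abs_le_iff abs_less_iff)

lemma closed_box_homeomorphism:
  obtains g where "continuous_on ((\<lambda>z. (fst z, u z)) ` closed_box) g"
    and "\<And>z. z \<in> closed_box \<Longrightarrow> g (fst z, u z) = z"
proof -
  have "inj_on (\<lambda>z. (fst z, u z)) closed_box"
  proof (rule inj_onI)
    fix a b assume "a \<in> closed_box" "b \<in> closed_box" "(fst a, u a) = (fst b, u b)"
    then show "a = b" unfolding closed_box_def
      using inj_vertical[of "fst a" "snd a" "snd b"] by (auto simp: prod_eq_iff abs_le_iff)
  qed
  moreover have "continuous_on closed_box (\<lambda>z. (fst z, u z))"
    by (intro continuous_intros cauchy_analytic_continuous_on[OF analytic])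
  moreover have "compact closed_box" unfolding closed_box_def by (intro compact_Times compact_Icc)
  ultimately obtain g where "homeomorphism closed_box ((\<lambda>z. (fst z, u z)) ` closed_box) (\<lambda>z. (fst z, u z)) g"
    using homeomorphism_compact by blast
  then show ?thesis using that unfolding homeomorphism_def by auto
qed

lemma horizontal_segment_in_image:
  assumes "\<bar>t - u (x\<^sub>0, y\<^sub>0)\<bar> < \<eta>"
  shows "(\<lambda>x. (x, t)) ` {x\<^sub>0 - \<delta>..x\<^sub>0 + \<delta>} \<subseteq> (\<lambda>z. (fst z, u z)) ` closed_box"
proof
  fix w assume "w \<in> (\<lambda>x. (x, t)) ` {x\<^sub>0 - \<delta>..x\<^sub>0 + \<delta>}"
  then obtain x where "x \<in> {x\<^sub>0 - \<delta>..x\<^sub>0 + \<delta>}" and w: "w = (x, t)" by auto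
  then have x: "\<bar>x - x\<^sub>0\<bar> \<le> \<delta>" by auto
  obtain y where "y\<^sub>0 - \<epsilon> < y" "y < y\<^sub>0 + \<epsilon>" "u (x, y) = t"
    using level_meets_vertical[OF x assms] by blast
  then have "(x, y) \<in> closed_box" "w = (fst (x, y), u (x, y))"
    using x w unfolding closed_box_def by auto
  then show "w \<in> (\<lambda>z. (fst z, u z)) ` closed_box" by blast
qed

text \<open>The horizontal segment at height \<open>u z\<^sub>1\<close> pulls back to a connected piece of the level set
  containing all points of \<open>S\<close> at that level.\<close>
lemma connected_component_level_S:
  assumes z\<^sub>1: "z\<^sub>1 \<in> S" and z\<^sub>2: "z\<^sub>2 \<in> S" and eq: "u z\<^sub>1 = u z\<^sub>2"
  shows "connected_component {z. u z = u z\<^sub>1} z\<^sub>1 z\<^sub>2"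
proof -
  obtain g where g_cont: "continuous_on ((\<lambda>z. (fst z, u z)) ` closed_box) g"
    and g_inv: "\<And>z. z \<in> closed_box \<Longrightarrow> g (fst z, u z) = z"
    using closed_box_homeomorphism by blast
  define L where "L = (\<lambda>x. (x, u z\<^sub>1)) ` {x\<^sub>0 - \<delta>..x\<^sub>0 + \<delta>}"
  have L_sub: "L \<subseteq> (\<lambda>z. (fst z, u z)) ` closed_box"
    unfolding L_def using S_bounds[OF z\<^sub>1] by (intro horizontal_segment_in_image) auto
  have "connected L" unfolding L_def
    by (intro connected_continuous_image continuous_intros connected_Icc)
  then have "connected (g ` L)"
    by (rule connected_continuous_image[OF continuous_on_subset[OF g_cont L_sub]])
  moreover have "g ` L \<subseteq> {z. u z = u z\<^sub>1}"
  proof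
    fix v assume "v \<in> g ` L"
    then obtain k where "k \<in> closed_box" "v = g (fst k, u k)" "(fst k, u k) \<in> L"
      using L_sub by auto
    then show "v \<in> {z. u z = u z\<^sub>1}" using g_inv unfolding L_def by auto
  qed
  moreover have in_image: "z \<in> g ` L" if "z \<in> S" "u z = u z\<^sub>1" for z
  proof -
    have "(fst z, u z) \<in> L"
      using S_bounds[OF that(1)] that(2) unfolding L_def by (auto simp: abs_less_iff)
    then show ?thesis using g_inv[of z] S_subset_closed_box that(1) by (metis image_eqI subsetD)
  qed
  ultimately show ?thesis
    using connected_componentI in_image z\<^sub>1 z\<^sub>2 eq by metis
qed

definition level_const :: "(real \<times> real \<Rightarrow> real) \<Rightarrow> bool" where
  "level_const g \<longleftrightarrow> (\<forall>z\<^sub>1\<in>S. \<forall>z\<^sub>2\<in>S. u z\<^sub>1 = u z\<^sub>2 \<longrightarrow> g z\<^sub>1 = g z\<^sub>2)"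

definition level_height :: "real \<Rightarrow> real" where
  "level_height s = (THE y. y\<^sub>0 - \<epsilon> \<le> y \<and> y \<le> y\<^sub>0 + \<epsilon> \<and> u (x\<^sub>0, y) = s)"

lemma level_height_u:
  assumes "y\<^sub>0 - \<epsilon> \<le> y" "y \<le> y\<^sub>0 + \<epsilon>"
  shows "level_height (u (x\<^sub>0, y)) = y"
  unfolding level_height_def
  by (rule the_equality) (use assms inj_vertical[of x\<^sub>0] \<delta>_pos in auto)

lemma level_height:
  assumes "\<bar>s - u (x\<^sub>0, y\<^sub>0)\<bar> < \<eta>"
  shows "y\<^sub>0 - \<epsilon> < level_height s" "level_height s < y\<^sub>0 + \<epsilon>" "u (x\<^sub>0, level_height s) = s"
proof -
  obtain y where "y\<^sub>0 - \<epsilon> < y" "y < y\<^sub>0 + \<epsilon>" "u (x\<^sub>0, y) = s"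
    using level_meets_vertical[OF _ assms, of x\<^sub>0] \<delta>_pos by auto
  with level_height_u[of y]
  show "y\<^sub>0 - \<epsilon> < level_height s" "level_height s < y\<^sub>0 + \<epsilon>" "u (x\<^sub>0, level_height s) = s"
    by auto
qed

lemma open_horizontal_slice: "open {t. (t, y) \<in> S}"
  using continuous_open_vimage[OF open_S, of "\<lambda>t. (t, y)"] by (simp add: vimage_def continuous_intros)

lemma open_vertical_slice: "open {t. (x, t) \<in> S}"
  using continuous_open_vimage[OF open_S, of "\<lambda>t. (x, t)"] by (simp add: vimage_def continuous_intros)

lemma level_height_in_S:
  assumes "\<bar>s - u (x\<^sub>0, y\<^sub>0)\<bar> < \<eta>"
  shows "(x\<^sub>0, level_height s) \<in> S"
  using level_height[OF assms] assms \<delta>_pos unfolding S_def by auto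

lemma level_height_has_derivative:
  assumes s: "\<bar>s - u (x\<^sub>0, y\<^sub>0)\<bar> < \<eta>"
  shows "DERIV level_height s :> inverse (pdy u (x\<^sub>0, level_height s))"
proof (rule DERIV_inverse_function[where f = "\<lambda>y. u (x\<^sub>0, y)"
      and a = "u (x\<^sub>0, y\<^sub>0) - \<eta>" and b = "u (x\<^sub>0, y\<^sub>0) + \<eta>"])
  show "DERIV (\<lambda>y. u (x\<^sub>0, y)) (level_height s) :> pdy u (x\<^sub>0, level_height s)"
    using cauchy_analytic_has_pdy[OF analytic] .
  show "pdy u (x\<^sub>0, level_height s) \<noteq> 0" using pdy_nonzero[OF level_height_in_S[OF s]] .
  show "u (x\<^sub>0, y\<^sub>0) - \<eta> < s" "s < u (x\<^sub>0, y\<^sub>0) + \<eta>" using s by auto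
  show "\<And>y. u (x\<^sub>0, y\<^sub>0) - \<eta> < y \<Longrightarrow> y < u (x\<^sub>0, y\<^sub>0) + \<eta> \<Longrightarrow> u (x\<^sub>0, level_height y) = y"
    using level_height by auto
  have "isCont level_height (u (x\<^sub>0, level_height s))"
    by (rule isCont_inverse_function2[where f = "\<lambda>y. u (x\<^sub>0, y)" and x = "level_height s"
          and a = "y\<^sub>0 - \<epsilon>" and b = "y\<^sub>0 + \<epsilon>"])
       (use level_height[OF s] level_height_u
         DERIV_isCont[OF cauchy_analytic_has_pdy[OF analytic, where A = UNIV]] in auto)
  then show "isCont level_height s" using level_height(3)[OF s] by simp
qed

text \<open>If \<open>g = G \<circ> u\<close> on \<open>S\<close>, then \<open>G' \<circ> u = g\<^sub>y / u\<^sub>y\<close> is again a function of \<open>u\<close>, and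
  \<open>g\<^sub>x = (G' \<circ> u) u\<^sub>x\<close>. \<open>G\<close> is read off along the line \<open>x = x\<^sub>0\<close> and differentiated through
  the inverse function \<^const>\<open>level_height\<close>.\<close>
lemma level_const_derivative:
  assumes g: "level_const g"
    and g_x: "\<And>z. z \<in> S \<Longrightarrow> ((\<lambda>t. g (t, snd z)) has_real_derivative g\<^sub>x z) (at (fst z))"
    and g_y: "\<And>z. z \<in> S \<Longrightarrow> ((\<lambda>t. g (fst z, t)) has_real_derivative g\<^sub>y z) (at (snd z))"
  shows "level_const (\<lambda>z. g\<^sub>y z / pdy u z)"
    and "\<And>z. z \<in> S \<Longrightarrow> g\<^sub>x z = g\<^sub>y z / pdy u z * pdx u z"
proof -
  define G where "G s = g (x\<^sub>0, level_height s)" for s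
  define G' where "G' s = g\<^sub>y (x\<^sub>0, level_height s) / pdy u (x\<^sub>0, level_height s)" for s
  have in_range: "\<bar>u z - u (x\<^sub>0, y\<^sub>0)\<bar> < \<eta>" if "z \<in> S" for z
    using S_bounds[OF that] by auto
  have g_eq: "g z = G (u z)" if z: "z \<in> S" for z
    using g z level_height_in_S[OF in_range[OF z]] level_height(3)[OF in_range[OF z]]
    unfolding level_const_def G_def by metis
  have G_deriv: "DERIV G s :> G' s" if s: "\<bar>s - u (x\<^sub>0, y\<^sub>0)\<bar> < \<eta>" for s
  proof -
    have "DERIV (\<lambda>t. g (x\<^sub>0, t)) (level_height s) :> g\<^sub>y (x\<^sub>0, level_height s)"
      using g_y[OF level_height_in_S[OF s]] by simp
    from DERIV_chain2[OF this level_height_has_derivative[OF s]] show ?thesis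
      unfolding G_def G'_def by (simp add: divide_inverse)
  qed
  have chain: "g\<^sub>x z = G' (u z) * pdx u z \<and> g\<^sub>y z = G' (u z) * pdy u z" if z: "z \<in> S" for z
  proof -
    obtain x y where z_eq: "z = (x, y)" by fastforce
    have G_at: "DERIV G (u (x, y)) :> G' (u z)"
      using G_deriv[OF in_range[OF z]] z_eq by simp
    have "DERIV (\<lambda>t. G (u (t, y))) x :> G' (u z) * pdx u z"
      using DERIV_chain2[OF G_at cauchy_analytic_has_pdx[OF analytic]] z_eq by simp
    then have "DERIV (\<lambda>t. g (t, y)) x :> G' (u z) * pdx u z"
      by (rule has_field_derivative_transform_within_open[OF _ open_horizontal_slice])
         (use z z_eq g_eq in auto)
    moreover have "DERIV (\<lambda>t. G (u (x, t))) y :> G' (u z) * pdy u z"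
      using DERIV_chain2[OF G_at cauchy_analytic_has_pdy[OF analytic]] z_eq by simp
    then have "DERIV (\<lambda>t. g (x, t)) y :> G' (u z) * pdy u z"
      by (rule has_field_derivative_transform_within_open[OF _ open_vertical_slice])
         (use z z_eq g_eq in auto)
    ultimately show ?thesis
      using DERIV_unique g_x[OF z] g_y[OF z] z_eq by fastforce
  qed
  have ratio: "g\<^sub>y z / pdy u z = G' (u z)" if "z \<in> S" for z
    using chain[OF that] pdy_nonzero[OF that] by simp
  show "level_const (\<lambda>z. g\<^sub>y z / pdy u z)" unfolding level_const_def using ratio by metis
  show "g\<^sub>x z = g\<^sub>y z / pdy u z * pdx u z" if "z \<in> S" for z
    using chain[OF that] ratio[OF that] by simp
qed

lemma pdx_vanishing:
  assumes "\<And>z. z \<in> S \<Longrightarrow> F z = 0" "z \<in> S"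
    and "((\<lambda>t. F (t, snd z)) has_real_derivative D) (at (fst z))"
  shows "D = 0"
proof -
  obtain x y where z: "z = (x, y)" by fastforce
  have "((\<lambda>t. F (t, y)) has_real_derivative 0) (at x)"
    by (rule has_field_derivative_transform_within_open[OF DERIV_const open_horizontal_slice])
       (use assms z in auto)
  then show ?thesis using DERIV_unique assms(3) z by auto
qed

lemma pdy_vanishing:
  assumes "\<And>z. z \<in> S \<Longrightarrow> F z = 0" "z \<in> S"
    and "((\<lambda>t. F (fst z, t)) has_real_derivative D) (at (snd z))"
  shows "D = 0"
proof -
  obtain x y where z: "z = (x, y)" by fastforce
  have "((\<lambda>t. F (x, t)) has_real_derivative 0) (at y)"
    by (rule has_field_derivative_transform_within_open[OF DERIV_const open_vertical_slice])
       (use assms z in auto)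
  then show ?thesis using DERIV_unique assms(3) z by auto
qed

end

lemma pdy_pos_on_square:
  assumes "cauchy_analytic u" and pos: "pdy u (x\<^sub>0, y\<^sub>0) > 0"
  obtains \<epsilon> where "0 < \<epsilon>" "\<And>x y. \<bar>x - x\<^sub>0\<bar> \<le> \<epsilon> \<Longrightarrow> \<bar>y - y\<^sub>0\<bar> \<le> \<epsilon> \<Longrightarrow> pdy u (x, y) > 0"
proof -
  have "isCont (pdy u) (x\<^sub>0, y\<^sub>0)" using cauchy_analytic_isCont[OF cauchy_analytic_pdy[OF assms(1)]] .
  then obtain d where d: "0 < d"
    "\<And>z. dist z (x\<^sub>0, y\<^sub>0) < d \<Longrightarrow> dist (pdy u z) (pdy u (x\<^sub>0, y\<^sub>0)) < pdy u (x\<^sub>0, y\<^sub>0)"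
    using pos unfolding continuous_at_eps_delta by blast
  have "pdy u (x, y) > 0" if "\<bar>x - x\<^sub>0\<bar> \<le> d / 3" "\<bar>y - y\<^sub>0\<bar> \<le> d / 3" for x y
  proof -
    have "dist (x, y) (x\<^sub>0, y\<^sub>0) \<le> \<bar>x - x\<^sub>0\<bar> + \<bar>y - y\<^sub>0\<bar>"
      using sqrt_sum_squares_le_sum_abs[of "x - x\<^sub>0" "y - y\<^sub>0"] by (simp add: dist_Pair_Pair dist_real_def)
    then have "dist (x, y) (x\<^sub>0, y\<^sub>0) < d" using that d by linarith
    from d(2)[OF this] show ?thesis by (simp add: dist_real_def abs_less_iff)
  qed
  with d(1) show ?thesis using that[of "d / 3"] by simp
qed

lemma regular_box_exists:
  assumes analytic: "cauchy_analytic u" and pos: "pdy u (x\<^sub>0, y\<^sub>0) > 0"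
  obtains \<delta> \<epsilon> \<eta> where "regular_box u x\<^sub>0 y\<^sub>0 \<delta> \<epsilon> \<eta>"
proof -
  obtain \<epsilon> where \<epsilon>: "0 < \<epsilon>"
    and pdy_pos: "\<And>x y. \<bar>x - x\<^sub>0\<bar> \<le> \<epsilon> \<Longrightarrow> \<bar>y - y\<^sub>0\<bar> \<le> \<epsilon> \<Longrightarrow> pdy u (x, y) > 0"
    using pdy_pos_on_square[OF analytic pos] by blast
  define u\<^sub>0 where "u\<^sub>0 = u (x\<^sub>0, y\<^sub>0)"
  have below: "u (x\<^sub>0, y\<^sub>0 - \<epsilon>) < u\<^sub>0" and above: "u\<^sub>0 < u (x\<^sub>0, y\<^sub>0 + \<epsilon>)"
    using cauchy_analytic_strict_mono_vertical[OF analytic, of _ _ x\<^sub>0] pdy_pos \<epsilon>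
    unfolding u\<^sub>0_def by auto
  define \<eta> where "\<eta> = min (u\<^sub>0 - u (x\<^sub>0, y\<^sub>0 - \<epsilon>)) (u (x\<^sub>0, y\<^sub>0 + \<epsilon>) - u\<^sub>0) / 2"
  have \<eta>: "0 < \<eta>" "2 * \<eta> \<le> u\<^sub>0 - u (x\<^sub>0, y\<^sub>0 - \<epsilon>)" "2 * \<eta> \<le> u (x\<^sub>0, y\<^sub>0 + \<epsilon>) - u\<^sub>0"
    using below above unfolding \<eta>_def by auto
  have "isCont (\<lambda>x. u (x, y)) x\<^sub>0" for y
    using cauchy_analytic_has_pdx[OF analytic] DERIV_isCont by blast
  then obtain d\<^sub>1 d\<^sub>2 where d\<^sub>1: "0 < d\<^sub>1" "\<And>x. dist x x\<^sub>0 < d\<^sub>1 \<Longrightarrow> dist (u (x, y\<^sub>0 - \<epsilon>)) (u (x\<^sub>0, y\<^sub>0 - \<epsilon>)) < \<eta>"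
    and d\<^sub>2: "0 < d\<^sub>2" "\<And>x. dist x x\<^sub>0 < d\<^sub>2 \<Longrightarrow> dist (u (x, y\<^sub>0 + \<epsilon>)) (u (x\<^sub>0, y\<^sub>0 + \<epsilon>)) < \<eta>"
    using \<eta>(1) unfolding continuous_at_eps_delta by meson
  define \<delta> where "\<delta> = min \<epsilon> (min d\<^sub>1 d\<^sub>2) / 2"
  have \<delta>: "0 < \<delta>" "\<delta> \<le> \<epsilon>" "\<delta> < d\<^sub>1" "\<delta> < d\<^sub>2" using \<epsilon> d\<^sub>1 d\<^sub>2 unfolding \<delta>_def by auto
  have "regular_box u x\<^sub>0 y\<^sub>0 \<delta> \<epsilon> \<eta>"
  proof
    show "cauchy_analytic u" "0 < \<delta>" "0 < \<epsilon>" "0 < \<eta>" using analytic \<delta> \<epsilon> \<eta> by auto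
    show "pdy u (x, y) > 0" if "\<bar>x - x\<^sub>0\<bar> \<le> \<delta>" "\<bar>y - y\<^sub>0\<bar> \<le> \<epsilon>" for x y
      using pdy_pos that \<delta> by auto
    show "u (x, y\<^sub>0 - \<epsilon>) < u (x\<^sub>0, y\<^sub>0) - \<eta>" if "\<bar>x - x\<^sub>0\<bar> \<le> \<delta>" for x
    proof -
      have "dist x x\<^sub>0 < d\<^sub>1" using that \<delta> by (simp add: dist_real_def)
      from d\<^sub>1(2)[OF this] show ?thesis using \<eta> unfolding u\<^sub>0_def dist_real_def by (simp add: abs_less_iff)
    qed
    show "u (x, y\<^sub>0 + \<epsilon>) > u (x\<^sub>0, y\<^sub>0) + \<eta>" if "\<bar>x - x\<^sub>0\<bar> \<le> \<delta>" for x
    proof -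
      have "dist x x\<^sub>0 < d\<^sub>2" using that \<delta> by (simp add: dist_real_def)
      from d\<^sub>2(2)[OF this] show ?thesis using \<eta> unfolding u\<^sub>0_def dist_real_def by (simp add: abs_less_iff)
    qed
  qed
  then show ?thesis by (rule that)
qed

subsection \<open>The conformal metric \<open>e\<^bsup>y - x\<^sup>2\<^esup> (dx\<^sup>2 + dy\<^sup>2)\<close>\<close>

lemma grad_sq_conformal:
  assumes "\<And>z. 0 < \<mu> z"
  shows "grad_sq \<mu> (\<lambda>_. 0) \<mu> I = (\<lambda>z. ((pdx I z)\<^sup>2 + (pdy I z)\<^sup>2) / \<mu> z)"
proof
  fix z
  have "\<mu> z \<noteq> 0" using assms[of z] by simp
  then show "grad_sq \<mu> (\<lambda>_. 0) \<mu> I z = ((pdx I z)\<^sup>2 + (pdy I z)\<^sup>2) / \<mu> z"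
    by (simp add: grad_sq_def metric_det_def power2_eq_square field_simps)
qed

lemma laplace_beltrami_conformal:
  assumes "\<And>z. 0 < \<mu> z"
  shows "laplace_beltrami \<mu> (\<lambda>_. 0) \<mu> I = (\<lambda>z. (pdx (pdx I) z + pdy (pdy I) z) / \<mu> z)"
proof -
  have sqrt_det: "sqrt (metric_det \<mu> (\<lambda>_. 0) \<mu> z) = \<mu> z" for z
    using assms[of z] by (simp add: metric_det_def power2_eq_square[symmetric])
  have "(\<lambda>z. sqrt (metric_det \<mu> (\<lambda>_. 0) \<mu> z) *
          ((\<mu> z * pdx I z - 0 * pdy I z) / metric_det \<mu> (\<lambda>_. 0) \<mu> z)) = pdx I"
    and "(\<lambda>z. sqrt (metric_det \<mu> (\<lambda>_. 0) \<mu> z) *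
          ((- 0 * pdx I z + \<mu> z * pdy I z) / metric_det \<mu> (\<lambda>_. 0) \<mu> z)) = pdy I"
    using assms[THEN less_imp_neq, symmetric] unfolding sqrt_det
    by (simp_all add: fun_eq_iff metric_det_def power2_eq_square)
  then show ?thesis
    unfolding laplace_beltrami_def sqrt_det by simp
qed

text \<open>\<open>\<kappa> = 1 / \<mu> = - \<Delta> (log \<mu>) / (2 \<mu>)\<close> for \<open>\<mu> = e\<^bsup>y - x\<^sup>2\<^esup>\<close>: the Gaussian curvature.\<close>
definition kappa :: "real \<times> real \<Rightarrow> real" where
  "kappa z = exp ((fst z)\<^sup>2 - snd z)"

lemma kappa_pos: "0 < kappa z"
  by (simp add: kappa_def)

lemma kappa_has_derivative_x: "((\<lambda>t. kappa (t, y)) has_real_derivative 2 * x * kappa (x, y)) (at x within A)"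
  unfolding kappa_def by (auto intro!: derivative_eq_intros)

lemma kappa_has_derivative_y: "((\<lambda>t. kappa (x, t)) has_real_derivative - kappa (x, y)) (at y within A)"
  unfolding kappa_def by (auto intro!: derivative_eq_intros)

definition level_invariant :: "(real \<times> real \<Rightarrow> real) \<Rightarrow> (real \<times> real \<Rightarrow> real) \<Rightarrow> bool" where
  "level_invariant u g \<longleftrightarrow>
     (\<forall>z\<^sub>1 z\<^sub>2. connected_component {z. u z = u z\<^sub>1} z\<^sub>1 z\<^sub>2 \<longrightarrow> g z\<^sub>2 = g z\<^sub>1)"

lemma level_invariant_uminus:
  "level_invariant (\<lambda>z. - u z) (\<lambda>z. - g z) \<longleftrightarrow> level_invariant u g"
  by (simp add: level_invariant_def)

lemma level_invariant_uminus_fun: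
  "level_invariant (\<lambda>z. - u z) g \<longleftrightarrow> level_invariant u g"
  by (simp add: level_invariant_def)

lemma (in regular_box) level_invariant_imp_level_const:
  "level_invariant u g \<Longrightarrow> level_const g"
  unfolding level_invariant_def level_const_def using connected_component_level_S by metis

text \<open>The identity behind the curvature formula: \<open>a\<^sub>1 = \<phi>'\<close>, \<open>a\<^sub>2 = \<phi>''\<close>, \<open>b\<^sub>1 = \<psi>'\<close> where
  \<open>|\<nabla>\<^sub>h u|\<^sup>2 = \<phi> \<circ> u\<close>, \<open>\<Delta>\<^sub>h u = \<psi> \<circ> u\<close>; \<open>p, q, r, s, t\<close> stand for \<open>u\<^sub>x, u\<^sub>y, u\<^sub>x\<^sub>x, u\<^sub>x\<^sub>y, u\<^sub>y\<^sub>y\<close>,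
  \<open>r\<^sub>x, s\<^sub>x, s\<^sub>y, t\<^sub>y\<close> for third derivatives, \<open>e\<close> for \<open>\<kappa>\<close> and \<open>X\<close> for \<open>x\<close>. Hypotheses
  \<open>a\<^sub>1, a\<^sub>2, b\<^sub>1\<close> compute these derivatives in the \<open>y\<close>-direction, \<open>h\<^sub>1, h\<^sub>2, h\<^sub>3\<close> are the
  chain rule in the \<open>x\<close>-direction.\<close>
lemma curvature_identity:
  fixes X e p q r s t r\<^sub>x s\<^sub>x s\<^sub>y t\<^sub>y a\<^sub>1 a\<^sub>2 b\<^sub>1 :: real
  assumes "p\<^sup>2 + q\<^sup>2 \<noteq> 0"
    and a\<^sub>1: "a\<^sub>1 * q = (2 * p * s + 2 * q * t) * e - (p\<^sup>2 + q\<^sup>2) * e"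
    and a\<^sub>2: "a\<^sub>2 * q\<^sup>2 = (2 * s * s + 2 * p * s\<^sub>y + 2 * t * t + 2 * q * t\<^sub>y) * e
                  - 2 * (2 * p * s + 2 * q * t) * e + (p\<^sup>2 + q\<^sup>2) * e - a\<^sub>1 * t"
    and b\<^sub>1: "b\<^sub>1 * q = (s\<^sub>x + t\<^sub>y) * e - (r + t) * e"
    and h\<^sub>1: "(2 * p * r + 2 * q * s) * e + (p\<^sup>2 + q\<^sup>2) * (2 * X * e) = a\<^sub>1 * p"
    and h\<^sub>2: "(2 * r * r + 2 * p * r\<^sub>x + 2 * s * s + 2 * q * s\<^sub>x) * e + 2 * (2 * p * r + 2 * q * s) * (2 * X * e)
              + (p\<^sup>2 + q\<^sup>2) * (2 * e + 4 * X * X * e) = a\<^sub>2 * p\<^sup>2 + a\<^sub>1 * r"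
    and h\<^sub>3: "(r\<^sub>x + s\<^sub>y) * e + (r + t) * (2 * X * e) = b\<^sub>1 * p"
  shows "(2 * ((r + t) * e) - a\<^sub>1) * (a\<^sub>1 - (r + t) * e) + (p\<^sup>2 + q\<^sup>2) * e * (a\<^sub>2 - 2 * b\<^sub>1)
           = 2 * ((p\<^sup>2 + q\<^sup>2) * e) * e"
proof -
  have "(p\<^sup>2 + q\<^sup>2) * (a\<^sub>2 - 2 * b\<^sub>1) =
      (2 * r * r + 2 * p * r\<^sub>x + 2 * s * s + 2 * q * s\<^sub>x) * e + 2 * (2 * p * r + 2 * q * s) * (2 * X * e)
      + (p\<^sup>2 + q\<^sup>2) * (2 * e + 4 * X * X * e) - a\<^sub>1 * r
      + (2 * s * s + 2 * p * s\<^sub>y + 2 * t * t + 2 * q * t\<^sub>y) * e - 2 * (2 * p * s + 2 * q * t) * e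
      + (p\<^sup>2 + q\<^sup>2) * e - a\<^sub>1 * t
      - 2 * (p * ((r\<^sub>x + s\<^sub>y) * e + (r + t) * (2 * X * e)) + q * ((s\<^sub>x + t\<^sub>y) * e - (r + t) * e))"
    using a\<^sub>2 b\<^sub>1 h\<^sub>2 h\<^sub>3 by algebra
  then have "(p\<^sup>2 + q\<^sup>2) * ((2 * ((r + t) * e) - a\<^sub>1) * (a\<^sub>1 - (r + t) * e)
      + (p\<^sup>2 + q\<^sup>2) * e * (a\<^sub>2 - 2 * b\<^sub>1) - 2 * ((p\<^sup>2 + q\<^sup>2) * e) * e) = 0"
    using a\<^sub>1 h\<^sub>1 by algebra
  with assms(1) show ?thesis by (metis mult_eq_0_iff eq_iff_diff_eq_0)
qed

text \<open>On a parabolic level set \<open>u\<^sub>x = -2 x u\<^sub>y\<close> the derivative of \<open>|\<nabla>\<^sub>h u|\<^sup>2\<close> along the level set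
  is a multiple of \<open>x u\<^sub>y\<^sup>3 \<kappa>\<close>.\<close>
lemma parabolic_level_sets_on_axis:
  fixes X e p q r s t a\<^sub>1 :: real
  assumes "q \<noteq> 0" "e \<noteq> 0"
    and "(2 * p * r + 2 * q * s) * e + (p\<^sup>2 + q\<^sup>2) * (2 * X * e) = a\<^sub>1 * p"
    and "a\<^sub>1 * q = (2 * p * s + 2 * q * t) * e - (p\<^sup>2 + q\<^sup>2) * e"
    and "p = -2 * X * q" "r + 2 * q + 2 * X * s = 0" "s + 2 * X * t = 0"
  shows "X = 0"
proof -
  have "X * q ^ 3 * e = 0" using assms(3-) by algebra
  with assms(1,2) show ?thesis by simp
qed

locale equilibrium_box = regular_box +
  assumes level_const_grad: "level_const (\<lambda>z. ((pdx u z)\<^sup>2 + (pdy u z)\<^sup>2) * kappa z)"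
    and level_const_laplacian: "level_const (\<lambda>z. (pdx (pdx u) z + pdy (pdy u) z) * kappa z)"
begin

abbreviation "u\<^sub>x \<equiv> pdx u"
abbreviation "u\<^sub>y \<equiv> pdy u"
abbreviation "u\<^sub>x\<^sub>x \<equiv> pdx (pdx u)"
abbreviation "u\<^sub>x\<^sub>y \<equiv> pdy (pdx u)"
abbreviation "u\<^sub>y\<^sub>y \<equiv> pdy (pdy u)"
abbreviation "u\<^sub>x\<^sub>x\<^sub>x \<equiv> pdx (pdx (pdx u))"
abbreviation "u\<^sub>x\<^sub>x\<^sub>y \<equiv> pdx (pdy (pdx u))"
abbreviation "u\<^sub>x\<^sub>y\<^sub>y \<equiv> pdy (pdy (pdx u))"
abbreviation "u\<^sub>y\<^sub>y\<^sub>y \<equiv> pdy (pdy (pdy u))"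

lemma mixed_partials:
  "pdx u\<^sub>y = u\<^sub>x\<^sub>y" "pdy u\<^sub>x\<^sub>x = u\<^sub>x\<^sub>x\<^sub>y" "pdx u\<^sub>y\<^sub>y = u\<^sub>x\<^sub>y\<^sub>y"
  using cauchy_analytic_pdx_pdy_commute[OF analytic]
    cauchy_analytic_pdx_pdy_commute[OF cauchy_analytic_pdx[OF analytic]]
    cauchy_analytic_pdx_pdy_commute[OF cauchy_analytic_pdy[OF analytic]]
  by simp_all

lemma partials_has_derivative_x:
  "((\<lambda>t. u\<^sub>x (t, y)) has_real_derivative u\<^sub>x\<^sub>x (x, y)) (at x within A)"
  "((\<lambda>t. u\<^sub>y (t, y)) has_real_derivative u\<^sub>x\<^sub>y (x, y)) (at x within A)"
  "((\<lambda>t. u\<^sub>x\<^sub>x (t, y)) has_real_derivative u\<^sub>x\<^sub>x\<^sub>x (x, y)) (at x within A)"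
  "((\<lambda>t. u\<^sub>x\<^sub>y (t, y)) has_real_derivative u\<^sub>x\<^sub>x\<^sub>y (x, y)) (at x within A)"
  "((\<lambda>t. u\<^sub>y\<^sub>y (t, y)) has_real_derivative u\<^sub>x\<^sub>y\<^sub>y (x, y)) (at x within A)"
  using analytic mixed_partials
  by (metis cauchy_analytic_has_pdx cauchy_analytic_pdx cauchy_analytic_pdy)+

lemma partials_has_derivative_y:
  "((\<lambda>t. u\<^sub>x (x, t)) has_real_derivative u\<^sub>x\<^sub>y (x, y)) (at y within A)"
  "((\<lambda>t. u\<^sub>y (x, t)) has_real_derivative u\<^sub>y\<^sub>y (x, y)) (at y within A)"
  "((\<lambda>t. u\<^sub>x\<^sub>x (x, t)) has_real_derivative u\<^sub>x\<^sub>x\<^sub>y (x, y)) (at y within A)"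
  "((\<lambda>t. u\<^sub>x\<^sub>y (x, t)) has_real_derivative u\<^sub>x\<^sub>y\<^sub>y (x, y)) (at y within A)"
  "((\<lambda>t. u\<^sub>y\<^sub>y (x, t)) has_real_derivative u\<^sub>y\<^sub>y\<^sub>y (x, y)) (at y within A)"
  using analytic mixed_partials
  by (metis cauchy_analytic_has_pdy cauchy_analytic_pdx cauchy_analytic_pdy)+

definition "W z = ((u\<^sub>x z)\<^sup>2 + (u\<^sub>y z)\<^sup>2) * kappa z"
definition "W\<^sub>x z = (2 * u\<^sub>x z * u\<^sub>x\<^sub>x z + 2 * u\<^sub>y z * u\<^sub>x\<^sub>y z) * kappa z
  + ((u\<^sub>x z)\<^sup>2 + (u\<^sub>y z)\<^sup>2) * (2 * fst z * kappa z)"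
definition "W\<^sub>y z = (2 * u\<^sub>x z * u\<^sub>x\<^sub>y z + 2 * u\<^sub>y z * u\<^sub>y\<^sub>y z) * kappa z - ((u\<^sub>x z)\<^sup>2 + (u\<^sub>y z)\<^sup>2) * kappa z"
definition "W\<^sub>x\<^sub>x z =
  (2 * u\<^sub>x\<^sub>x z * u\<^sub>x\<^sub>x z + 2 * u\<^sub>x z * u\<^sub>x\<^sub>x\<^sub>x z + 2 * u\<^sub>x\<^sub>y z * u\<^sub>x\<^sub>y z + 2 * u\<^sub>y z * u\<^sub>x\<^sub>x\<^sub>y z) * kappa z
  + 2 * (2 * u\<^sub>x z * u\<^sub>x\<^sub>x z + 2 * u\<^sub>y z * u\<^sub>x\<^sub>y z) * (2 * fst z * kappa z)
  + ((u\<^sub>x z)\<^sup>2 + (u\<^sub>y z)\<^sup>2) * (2 * kappa z + 4 * fst z * fst z * kappa z)"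
definition "W\<^sub>x\<^sub>y z =
  (2 * u\<^sub>x\<^sub>x z * u\<^sub>x\<^sub>y z + 2 * u\<^sub>x z * u\<^sub>x\<^sub>x\<^sub>y z + 2 * u\<^sub>x\<^sub>y z * u\<^sub>y\<^sub>y z + 2 * u\<^sub>y z * u\<^sub>x\<^sub>y\<^sub>y z) * kappa z
  + (2 * u\<^sub>x z * u\<^sub>x\<^sub>y z + 2 * u\<^sub>y z * u\<^sub>y\<^sub>y z) * (2 * fst z * kappa z)
  - ((2 * u\<^sub>x z * u\<^sub>x\<^sub>x z + 2 * u\<^sub>y z * u\<^sub>x\<^sub>y z) * kappa z + ((u\<^sub>x z)\<^sup>2 + (u\<^sub>y z)\<^sup>2) * (2 * fst z * kappa z))"
definition "W\<^sub>y\<^sub>y z =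
  (2 * u\<^sub>x\<^sub>y z * u\<^sub>x\<^sub>y z + 2 * u\<^sub>x z * u\<^sub>x\<^sub>y\<^sub>y z + 2 * u\<^sub>y\<^sub>y z * u\<^sub>y\<^sub>y z + 2 * u\<^sub>y z * u\<^sub>y\<^sub>y\<^sub>y z) * kappa z
  - 2 * (2 * u\<^sub>x z * u\<^sub>x\<^sub>y z + 2 * u\<^sub>y z * u\<^sub>y\<^sub>y z) * kappa z + ((u\<^sub>x z)\<^sup>2 + (u\<^sub>y z)\<^sup>2) * kappa z"

definition "Lap z = (u\<^sub>x\<^sub>x z + u\<^sub>y\<^sub>y z) * kappa z"
definition "Lap\<^sub>x z = (u\<^sub>x\<^sub>x\<^sub>x z + u\<^sub>x\<^sub>y\<^sub>y z) * kappa z + (u\<^sub>x\<^sub>x z + u\<^sub>y\<^sub>y z) * (2 * fst z * kappa z)"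
definition "Lap\<^sub>y z = (u\<^sub>x\<^sub>x\<^sub>y z + u\<^sub>y\<^sub>y\<^sub>y z) * kappa z - (u\<^sub>x\<^sub>x z + u\<^sub>y\<^sub>y z) * kappa z"

text \<open>On \<open>S\<close> we have \<open>W = \<phi> \<circ> u\<close> and \<open>Lap = \<psi> \<circ> u\<close>; the next three functions are \<open>\<phi>' \<circ> u\<close>,
  \<open>\<phi>'' \<circ> u\<close> and \<open>\<psi>' \<circ> u\<close> there, computed as in \<open>level_const_derivative\<close>.\<close>
definition "dW z = W\<^sub>y z / u\<^sub>y z"
definition "dW\<^sub>x z = (W\<^sub>x\<^sub>y z * u\<^sub>y z - W\<^sub>y z * u\<^sub>x\<^sub>y z) / (u\<^sub>y z)\<^sup>2"
definition "dW\<^sub>y z = (W\<^sub>y\<^sub>y z * u\<^sub>y z - W\<^sub>y z * u\<^sub>y\<^sub>y z) / (u\<^sub>y z)\<^sup>2"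
definition "ddW z = dW\<^sub>y z / u\<^sub>y z"
definition "dLap z = Lap\<^sub>y z / u\<^sub>y z"

lemma W_has_derivatives:
  "((\<lambda>t. W (t, y)) has_real_derivative W\<^sub>x (x, y)) (at x)"
  "((\<lambda>t. W (x, t)) has_real_derivative W\<^sub>y (x, y)) (at y)"
  "((\<lambda>t. W\<^sub>x (t, y)) has_real_derivative W\<^sub>x\<^sub>x (x, y)) (at x)"
  "((\<lambda>t. W\<^sub>y (t, y)) has_real_derivative W\<^sub>x\<^sub>y (x, y)) (at x)"
  "((\<lambda>t. W\<^sub>y (x, t)) has_real_derivative W\<^sub>y\<^sub>y (x, y)) (at y)"
  unfolding W_def W\<^sub>x_def W\<^sub>y_def W\<^sub>x\<^sub>x_def W\<^sub>x\<^sub>y_def W\<^sub>y\<^sub>y_def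
  by (auto intro!: derivative_eq_intros partials_has_derivative_x partials_has_derivative_y
      kappa_has_derivative_x kappa_has_derivative_y simp: algebra_simps power2_eq_square)

lemma Lap_has_derivatives:
  "((\<lambda>t. Lap (t, y)) has_real_derivative Lap\<^sub>x (x, y)) (at x)"
  "((\<lambda>t. Lap (x, t)) has_real_derivative Lap\<^sub>y (x, y)) (at y)"
  unfolding Lap_def Lap\<^sub>x_def Lap\<^sub>y_def
  by (auto intro!: derivative_eq_intros partials_has_derivative_x partials_has_derivative_y
      kappa_has_derivative_x kappa_has_derivative_y simp: algebra_simps)

lemma dW_has_derivatives:
  assumes "z \<in> S"
  shows "((\<lambda>t. dW (t, snd z)) has_real_derivative dW\<^sub>x z) (at (fst z))"
    and "((\<lambda>t. dW (fst z, t)) has_real_derivative dW\<^sub>y z) (at (snd z))"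
proof -
  obtain x y where z: "z = (x, y)" by fastforce
  have "u\<^sub>y (x, y) \<noteq> 0" using pdy_nonzero assms z by simp
  then show "((\<lambda>t. dW (t, snd z)) has_real_derivative dW\<^sub>x z) (at (fst z))"
    and "((\<lambda>t. dW (fst z, t)) has_real_derivative dW\<^sub>y z) (at (snd z))"
    unfolding dW_def dW\<^sub>x_def dW\<^sub>y_def z
    by (auto intro!: derivative_eq_intros W_has_derivatives partials_has_derivative_x
        partials_has_derivative_y simp: power2_eq_square)
qed

lemma level_const_W: "level_const W"
  using level_const_grad unfolding W_def .

lemma level_const_Lap: "level_const Lap"
  using level_const_laplacian unfolding Lap_def .

lemma level_const_dW: "level_const dW" and W\<^sub>x_chain: "z \<in> S \<Longrightarrow> W\<^sub>x z = dW z * u\<^sub>x z"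
proof -
  have "((\<lambda>t. W (t, snd z)) has_real_derivative W\<^sub>x z) (at (fst z))" for z
    using W_has_derivatives(1)[of "snd z" "fst z"] by simp
  moreover have "((\<lambda>t. W (fst z, t)) has_real_derivative W\<^sub>y z) (at (snd z))" for z
    using W_has_derivatives(2)[of "fst z" "snd z"] by simp
  ultimately show "level_const dW" "z \<in> S \<Longrightarrow> W\<^sub>x z = dW z * u\<^sub>x z"
    using level_const_derivative[OF level_const_W] unfolding dW_def[abs_def] by blast+
qed

lemma level_const_ddW: "level_const ddW" and dW\<^sub>x_chain: "z \<in> S \<Longrightarrow> dW\<^sub>x z = ddW z * u\<^sub>x z"
  using level_const_derivative[OF level_const_dW dW_has_derivatives]
  unfolding ddW_def[abs_def] by auto

lemma level_const_dLap: "level_const dLap" and Lap\<^sub>x_chain: "z \<in> S \<Longrightarrow> Lap\<^sub>x z = dLap z * u\<^sub>x z"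
proof -
  have "((\<lambda>t. Lap (t, snd z)) has_real_derivative Lap\<^sub>x z) (at (fst z))" for z
    using Lap_has_derivatives(1)[of "snd z" "fst z"] by simp
  moreover have "((\<lambda>t. Lap (fst z, t)) has_real_derivative Lap\<^sub>y z) (at (snd z))" for z
    using Lap_has_derivatives(2)[of "fst z" "snd z"] by simp
  ultimately show "level_const dLap" "z \<in> S \<Longrightarrow> Lap\<^sub>x z = dLap z * u\<^sub>x z"
    using level_const_derivative[OF level_const_Lap] unfolding dLap_def[abs_def] by blast+
qed

lemma W\<^sub>x\<^sub>x_chain:
  assumes z: "z \<in> S"
  shows "W\<^sub>x\<^sub>x z = ddW z * (u\<^sub>x z)\<^sup>2 + dW z * u\<^sub>x\<^sub>x z"
proof -
  obtain x y where z_eq: "z = (x, y)" by fastforce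
  have "((\<lambda>t. W\<^sub>x (t, snd z) - dW (t, snd z) * u\<^sub>x (t, snd z)) has_real_derivative
      W\<^sub>x\<^sub>x z - (dW\<^sub>x z * u\<^sub>x z + dW z * u\<^sub>x\<^sub>x z)) (at (fst z))"
    using W_has_derivatives(3)[of y x] dW_has_derivatives(1)[OF z] partials_has_derivative_x(1)[of y x UNIV]
      z_eq by (auto intro!: derivative_eq_intros)
  from pdx_vanishing[OF _ z this] W\<^sub>x_chain dW\<^sub>x_chain[OF z] show ?thesis
    by (simp add: power2_eq_square algebra_simps)
qed

definition "curvature z = ((2 * Lap z - dW z) * (dW z - Lap z)) / (2 * W z) - dLap z + ddW z / 2"

lemma level_const_curvature: "level_const curvature"
  using level_const_W level_const_Lap level_const_dW level_const_ddW level_const_dLap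
  unfolding level_const_def curvature_def by metis

lemma curvature_eq_kappa:
  assumes z: "z \<in> S"
  shows "curvature z = kappa z"
proof -
  have q: "u\<^sub>y z \<noteq> 0" using pdy_nonzero[OF z] .
  then have grad: "(u\<^sub>x z)\<^sup>2 + (u\<^sub>y z)\<^sup>2 \<noteq> 0" by simp
  have "(2 * Lap z - dW z) * (dW z - Lap z) + W z * (ddW z - 2 * dLap z) = 2 * W z * kappa z"
    unfolding Lap_def W_def
  proof (rule curvature_identity[OF grad])
    show "dW z * u\<^sub>y z = (2 * u\<^sub>x z * u\<^sub>x\<^sub>y z + 2 * u\<^sub>y z * u\<^sub>y\<^sub>y z) * kappa z - ((u\<^sub>x z)\<^sup>2 + (u\<^sub>y z)\<^sup>2) * kappa z"
      using q unfolding dW_def W\<^sub>y_def by simp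
    show "ddW z * (u\<^sub>y z)\<^sup>2 =
        (2 * u\<^sub>x\<^sub>y z * u\<^sub>x\<^sub>y z + 2 * u\<^sub>x z * u\<^sub>x\<^sub>y\<^sub>y z + 2 * u\<^sub>y\<^sub>y z * u\<^sub>y\<^sub>y z + 2 * u\<^sub>y z * u\<^sub>y\<^sub>y\<^sub>y z) * kappa z
        - 2 * (2 * u\<^sub>x z * u\<^sub>x\<^sub>y z + 2 * u\<^sub>y z * u\<^sub>y\<^sub>y z) * kappa z + ((u\<^sub>x z)\<^sup>2 + (u\<^sub>y z)\<^sup>2) * kappa z
        - dW z * u\<^sub>y\<^sub>y z"
      using q unfolding ddW_def dW\<^sub>y_def dW_def W\<^sub>y\<^sub>y_def[symmetric]
      by (simp add: field_simps power2_eq_square)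
    show "dLap z * u\<^sub>y z = (u\<^sub>x\<^sub>x\<^sub>y z + u\<^sub>y\<^sub>y\<^sub>y z) * kappa z - (u\<^sub>x\<^sub>x z + u\<^sub>y\<^sub>y z) * kappa z"
      using q unfolding dLap_def Lap\<^sub>y_def by simp
  qed (use W\<^sub>x_chain[OF z] W\<^sub>x\<^sub>x_chain[OF z] Lap\<^sub>x_chain[OF z]
    in \<open>simp_all add: W\<^sub>x_def W\<^sub>x\<^sub>x_def Lap\<^sub>x_def\<close>)
  moreover have "W z \<noteq> 0" using grad kappa_pos[of z] unfolding W_def by simp
  ultimately show ?thesis unfolding curvature_def by (simp add: field_simps)
qed

lemma level_const_kappa: "level_const kappa"
  using level_const_curvature curvature_eq_kappa unfolding level_const_def by metis

text \<open>\<open>\<kappa>\<close> is a function of \<open>u\<close>, so the level sets of \<open>u\<close> are the parabolas \<open>y = x\<^sup>2 + c\<close>.\<close>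
lemma u\<^sub>x_parabolic:
  assumes z: "z \<in> S"
  shows "u\<^sub>x z = -2 * fst z * u\<^sub>y z"
proof -
  have "((\<lambda>t. kappa (t, snd z)) has_real_derivative 2 * fst z * kappa z) (at (fst z))" for z
    using kappa_has_derivative_x[of "snd z" "fst z"] by simp
  moreover have "((\<lambda>t. kappa (fst z, t)) has_real_derivative - kappa z) (at (snd z))" for z
    using kappa_has_derivative_y[of "fst z" "snd z"] by simp
  ultimately have "2 * fst z * kappa z = - kappa z / u\<^sub>y z * u\<^sub>x z"
    by (rule level_const_derivative(2)[OF level_const_kappa _ _ z])
  then have "kappa z * (u\<^sub>x z + 2 * fst z * u\<^sub>y z) = 0"
    using pdy_nonzero[OF z] by (simp add: field_simps)
  then show ?thesis using kappa_pos[of z] by simp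
qed

lemma u\<^sub>x_parabolic_derivatives:
  assumes z: "z \<in> S"
  shows "u\<^sub>x\<^sub>x z + 2 * u\<^sub>y z + 2 * fst z * u\<^sub>x\<^sub>y z = 0" and "u\<^sub>x\<^sub>y z + 2 * fst z * u\<^sub>y\<^sub>y z = 0"
proof -
  obtain x y where z_eq: "z = (x, y)" by fastforce
  have vanish: "\<And>z. z \<in> S \<Longrightarrow> u\<^sub>x z + 2 * fst z * u\<^sub>y z = 0" using u\<^sub>x_parabolic by simp
  have "((\<lambda>t. u\<^sub>x (t, snd z) + 2 * fst (t, snd z) * u\<^sub>y (t, snd z)) has_real_derivative
        u\<^sub>x\<^sub>x z + (2 * u\<^sub>y z + 2 * fst z * u\<^sub>x\<^sub>y z)) (at (fst z))"
    using partials_has_derivative_x(1,2)[of y x UNIV] z_eq by (auto intro!: derivative_eq_intros)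
  from pdx_vanishing[OF vanish z this] show "u\<^sub>x\<^sub>x z + 2 * u\<^sub>y z + 2 * fst z * u\<^sub>x\<^sub>y z = 0"
    by simp
  have "((\<lambda>t. u\<^sub>x (fst z, t) + 2 * fst (fst z, t) * u\<^sub>y (fst z, t)) has_real_derivative
        u\<^sub>x\<^sub>y z + 2 * fst z * u\<^sub>y\<^sub>y z) (at (snd z))"
    using partials_has_derivative_y(1,2)[of x y UNIV] z_eq by (auto intro!: derivative_eq_intros)
  from pdy_vanishing[OF vanish z this] show "u\<^sub>x\<^sub>y z + 2 * fst z * u\<^sub>y\<^sub>y z = 0" .
qed

lemma S_on_axis:
  assumes z: "z \<in> S"
  shows "fst z = 0"
proof (rule parabolic_level_sets_on_axis)
  show "u\<^sub>y z \<noteq> 0" "kappa z \<noteq> 0" using pdy_nonzero[OF z] kappa_pos[of z] by auto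
  show "(2 * u\<^sub>x z * u\<^sub>x\<^sub>x z + 2 * u\<^sub>y z * u\<^sub>x\<^sub>y z) * kappa z
      + ((u\<^sub>x z)\<^sup>2 + (u\<^sub>y z)\<^sup>2) * (2 * fst z * kappa z) = dW z * u\<^sub>x z"
    using W\<^sub>x_chain[OF z] unfolding W\<^sub>x_def .
  show "dW z * u\<^sub>y z = (2 * u\<^sub>x z * u\<^sub>x\<^sub>y z + 2 * u\<^sub>y z * u\<^sub>y\<^sub>y z) * kappa z - ((u\<^sub>x z)\<^sup>2 + (u\<^sub>y z)\<^sup>2) * kappa z"
    using pdy_nonzero[OF z] unfolding dW_def W\<^sub>y_def by simp
qed (use u\<^sub>x_parabolic[OF z] u\<^sub>x_parabolic_derivatives[OF z] in auto)

lemma contradiction: False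
proof -
  obtain d where d: "0 < d" "ball (x\<^sub>0, y\<^sub>0) d \<subseteq> S"
    using open_S center_in_S open_contains_ball by blast
  then have "(x\<^sub>0 + d / 2, y\<^sub>0) \<in> S" "(x\<^sub>0 - d / 2, y\<^sub>0) \<in> S"
    by (auto simp: dist_Pair_Pair dist_real_def intro!: subsetD[OF d(2)])
  then have "x\<^sub>0 + d / 2 = 0" "x\<^sub>0 - d / 2 = 0" using S_on_axis by force+
  with d(1) show False by linarith
qed

end

subsection \<open>Equilibrium functions of the metric\<close>

lemma level_invariant_imp_pdy_nonpos:
  assumes analytic: "cauchy_analytic u"
    and grad: "level_invariant u (\<lambda>z. ((pdx u z)\<^sup>2 + (pdy u z)\<^sup>2) * kappa z)"
    and lap: "level_invariant u (\<lambda>z. (pdx (pdx u) z + pdy (pdy u) z) * kappa z)"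
  shows "pdy u z \<le> 0"
proof (rule ccontr)
  obtain x\<^sub>0 y\<^sub>0 where z: "z = (x\<^sub>0, y\<^sub>0)" by fastforce
  assume "\<not> pdy u z \<le> 0"
  then have "pdy u (x\<^sub>0, y\<^sub>0) > 0" using z by simp
  then obtain \<delta> \<epsilon> \<eta> where box: "regular_box u x\<^sub>0 y\<^sub>0 \<delta> \<epsilon> \<eta>"
    by (rule regular_box_exists[OF analytic])
  have "equilibrium_box_axioms u x\<^sub>0 y\<^sub>0 \<delta> \<epsilon> \<eta>"
    using regular_box.level_invariant_imp_level_const[OF box] grad lap
    by (intro equilibrium_box_axioms.intro)
  with box have "equilibrium_box u x\<^sub>0 y\<^sub>0 \<delta> \<epsilon> \<eta>"
    by (rule equilibrium_box.intro)
  then show False by (rule equilibrium_box.contradiction)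
qed

lemma level_invariant_imp_pdy_zero:
  assumes analytic: "cauchy_analytic u"
    and grad: "level_invariant u (\<lambda>z. ((pdx u z)\<^sup>2 + (pdy u z)\<^sup>2) * kappa z)"
    and lap: "level_invariant u (\<lambda>z. (pdx (pdx u) z + pdy (pdy u) z) * kappa z)"
  shows "pdy u z = 0"
proof -
  have "pdy (\<lambda>z. - u z) z \<le> 0"
  proof (rule level_invariant_imp_pdy_nonpos)
    show "cauchy_analytic (\<lambda>z. - u z)" using cauchy_analytic_uminus[OF analytic] .
    show "level_invariant (\<lambda>z. - u z)
        (\<lambda>z. ((pdx (\<lambda>z. - u z) z)\<^sup>2 + (pdy (\<lambda>z. - u z) z)\<^sup>2) * kappa z)"
      using grad by (simp add: pdx_uminus[OF analytic] pdy_uminus[OF analytic] level_invariant_uminus_fun)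
    have "(\<lambda>z. (pdx (pdx (\<lambda>z. - u z)) z + pdy (pdy (\<lambda>z. - u z)) z) * kappa z)
        = (\<lambda>z. - ((pdx (pdx u) z + pdy (pdy u) z) * kappa z))"
      by (simp add: pdx_uminus pdy_uminus analytic cauchy_analytic_pdx cauchy_analytic_pdy
          fun_eq_iff algebra_simps)
    then show "level_invariant (\<lambda>z. - u z)
        (\<lambda>z. (pdx (pdx (\<lambda>z. - u z)) z + pdy (pdy (\<lambda>z. - u z)) z) * kappa z)"
      using lap by (simp only: level_invariant_uminus)
  qed
  with level_invariant_imp_pdy_nonpos[OF assms, of z] show ?thesis
    by (simp add: pdy_uminus[OF analytic])
qed

text \<open>If \<open>u\<^sub>y = 0\<close>, then \<open>u = f (x)\<close> and every vertical line lies in one level component, along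
  which \<open>|\<nabla>\<^sub>h u|\<^sup>2 = f'(x)\<^sup>2 e\<^bsup>x\<^sup>2 - y\<^esup>\<close> can only be constant if \<open>f'(x) = 0\<close>.\<close>
lemma level_invariant_pdy_zero_imp_constant:
  assumes analytic: "cauchy_analytic u"
    and grad: "level_invariant u (\<lambda>z. ((pdx u z)\<^sup>2 + (pdy u z)\<^sup>2) * kappa z)"
    and pdy_zero: "\<And>z. pdy u z = 0"
  shows "\<exists>k. \<forall>p. u p = k"
proof -
  have vertical: "u (x, y) = u (x, 0)" for x y
  proof -
    have "\<forall>t. DERIV (\<lambda>t. u (x, t)) t :> 0"
      using cauchy_analytic_has_pdy[OF analytic, of x _ UNIV] pdy_zero by simp
    from DERIV_isconst_all[OF this, of y 0] show ?thesis .
  qed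
  have "pdx u (x, 0) = 0" for x
  proof -
    have "connected ((\<lambda>y. (x, y)) ` (UNIV :: real set))"
      by (intro connected_continuous_image continuous_intros connected_UNIV)
    moreover have "(\<lambda>y. (x, y)) ` (UNIV :: real set) \<subseteq> {z. u z = u (x, 0)}" using vertical by auto
    ultimately have "connected_component {z. u z = u (x, 0)} (x, 0) (x, 1)"
      by (rule connected_componentI) auto
    with grad have "((pdx u (x, 1))\<^sup>2 + (pdy u (x, 1))\<^sup>2) * kappa (x, 1)
        = ((pdx u (x, 0))\<^sup>2 + (pdy u (x, 0))\<^sup>2) * kappa (x, 0)"
      unfolding level_invariant_def by blast
    moreover have "pdx u (x, 1) = pdx u (x, 0)"
      using vertical[of _ 1] unfolding pdx_def by simp
    moreover have "kappa (x, 1) \<noteq> kappa (x, 0)" by (simp add: kappa_def)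
    ultimately show ?thesis using pdy_zero by simp
  qed
  then have horizontal: "u (x, 0) = u (0, 0)" for x
  proof -
    have "\<forall>t. DERIV (\<lambda>t. u (t, 0)) t :> 0"
      using cauchy_analytic_has_pdx[OF analytic, of 0 _ UNIV] \<open>\<And>x. pdx u (x, 0) = 0\<close> by simp
    from DERIV_isconst_all[OF this, of x 0] show ?thesis .
  qed
  show ?thesis
  proof (intro exI allI)
    fix p :: "real \<times> real"
    obtain x y where "p = (x, y)" by fastforce
    then show "u p = u (0, 0)" using vertical[of x y] horizontal[of x] by simp
  qed
qed

lemma divide_conformal_factor: "a / (\<lambda>(x, y). exp (y - x\<^sup>2)) z = a * kappa z"
  by (cases z) (simp add: kappa_def exp_diff field_simps)

theorem mainTheorem6:
  fixes I :: "real \<times> real \<Rightarrow> real"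
  assumes "equilibrium_function
             (\<lambda>(x, y). exp (y - x\<^sup>2)) (\<lambda>_. 0) (\<lambda>(x, y). exp (y - x\<^sup>2)) I"
  shows "\<exists>k. \<forall>p. I p = k"
proof -
  have factor_pos: "\<And>z :: real \<times> real. 0 < (\<lambda>(x, y). exp (y - x\<^sup>2)) z"
    by (simp add: case_prod_beta)
  have analytic: "cauchy_analytic I"
    using assms real_analytic2_imp_cauchy_analytic unfolding equilibrium_function_def by blast
  have grad: "level_invariant I (\<lambda>z. ((pdx I z)\<^sup>2 + (pdy I z)\<^sup>2) * kappa z)"
    and lap: "level_invariant I (\<lambda>z. (pdx (pdx I) z + pdy (pdy I) z) * kappa z)"
    using assms
    unfolding equilibrium_function_def level_invariant_def grad_sq_conformal[OF factor_pos]
      laplace_beltrami_conformal[OF factor_pos] divide_conformal_factor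
    by auto
  show ?thesis
    using level_invariant_pdy_zero_imp_constant[OF analytic grad]
      level_invariant_imp_pdy_zero[OF analytic grad lap] by blast
qed

end
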